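(* Let $Z$ be a del Pezzo surface. (i) If $Z$ is not isomorphic to the blow-up of $\mathbb{P}^2$ in one or two points, then $O(Z)=\widehat{W}(Z)$. (ii) If $Z$ is isomorphic to the blow-up of $\mathbb{P}^2$ in two points, then $O(Z)=\widehat{W}(Z)\ltimes\mathbb{Z}$, a semidirect product of $\widehat W(Z)$ and an infinite cyclic group. (iii) If $Z$ is isomorphic to the blow-up of $\mathbb{P}^2$ in one point, then $\widehat{W}(Z)$ is trivial and $O(Z)\cong\mathbb{Z}$.
   Context: $Z$ is a smooth projective connected surface over $\mathbb{C}$ with ample $\omega_Z^{-1}$ (so $Z\cong\mathbb{P}^1\times\mathbb{P}^1$ or a blow-up of $\mathbb{P}^2$ at $0\le m\le 8$ general points); $K_Z=c_1(\omega_Z)$. $K(Z)$ is the Grothendieck group of the bounded derived category of coherent sheaves on $Z$, $r$ rank, $d(E)=c_1(E)\cdot(-K_Z)$, $\psi=(r,d):K(Z)\to\mathbb{Z}^2$, $\chi(E,F)=\sum_i(-1)^i\dim\mathrm{Hom}^i(E,F)$ the Euler form. $O(Z)$ is the group of automorphisms of $K(Z)$ preserving $\chi(-,-)$, $r$ and $d$. The affine roots are $\alpha\in\ker\psi$ with $\chi(\alpha,\alpha)=2$, and $\widehat{W}(Z)$ is the group generated by the reflections $\beta\mapsto\beta-\chi(\beta,\alpha)\alpha$ over affine roots $\alpha$. *)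

theory Defs
  imports "HOL-Algebra.Bij" "HOL-Algebra.Coset" "HOL-Algebra.Generated_Groups" "HOL-Algebra.Elementary_Groups"
begin

text \<open>Deformation types of del Pezzo surfaces: P1 x P1, or the blow-up of P2 in m points.
  The lattice K(Z) together with r, d and the Euler form only depends on this type.\<close>
datatype dP = P1xP1 | BlP2 nat

definition delPezzo :: "dP \<Rightarrow> bool" where
  "delPezzo Z \<longleftrightarrow> (case Z of P1xP1 \<Rightarrow> True | BlP2 m \<Rightarrow> m \<le> 8)"

text \<open>Rank of Pic(Z). For P1xP1 basis = the two fibre classes; for BlP2 m basis = H, E_1..E_m.\<close>
fun picrk :: "dP \<Rightarrow> nat" where
  "picrk P1xP1 = 2"
| "picrk (BlP2 m) = m + 1"

fun inter :: "dP \<Rightarrow> int list \<Rightarrow> int list \<Rightarrow> int" where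
  "inter P1xP1 D E = D!0 * E!1 + D!1 * E!0"
| "inter (BlP2 m) D E = D!0 * E!0 - (\<Sum>i\<in>{1..m}. D!i * E!i)"

fun antiK :: "dP \<Rightarrow> int list" where
  "antiK P1xP1 = [2, 2]"
| "antiK (BlP2 m) = 3 # replicate m (-1)"

text \<open>K(Z) is free with coordinates (rank, c_1, chi(O_Z,-)); E \<mapsto> (r(E), c_1(E), chi(O_Z,E))
  is an isomorphism K(Z) \<cong> Z \<oplus> Pic(Z) \<oplus> Z for a rational surface.\<close>
type_synonym kel = "int \<times> int list \<times> int"

definition KZ :: "dP \<Rightarrow> kel set" where
  "KZ Z = {(r, D, c). length D = picrk Z}"

definition kadd :: "kel \<Rightarrow> kel \<Rightarrow> kel" where
  "kadd x y = (case x of (r, D, c) \<Rightarrow> case y of (s, E, e) \<Rightarrow> (r + s, map2 (+) D E, c + e))"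

definition ksmul :: "int \<Rightarrow> kel \<Rightarrow> kel" where
  "ksmul k x = (case x of (r, D, c) \<Rightarrow> (k * r, map ((*) k) D, k * c))"

definition krk :: "kel \<Rightarrow> int" where
  "krk x = fst x"

definition kdeg :: "dP \<Rightarrow> kel \<Rightarrow> int" where
  "kdeg Z x = inter Z (fst (snd x)) (antiK Z)"

text \<open>Euler form via Riemann--Roch: with ch_2 = chi - r - d/2,
  chi(E,F) = r_E chi_F + r_F chi_E - r_E r_F - r_F d_E - c_1(E).c_1(F).\<close>
definition kchi :: "dP \<Rightarrow> kel \<Rightarrow> kel \<Rightarrow> int" where
  "kchi Z x y = (case x of (r, D, c) \<Rightarrow> case y of (s, E, e) \<Rightarrow>
      r * e + s * c - r * s - s * inter Z D (antiK Z) - inter Z D E)"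

abbreviation BG :: "dP \<Rightarrow> (kel \<Rightarrow> kel) monoid" where
  "BG Z \<equiv> BijGroup (KZ Z)"

definition Ocar :: "dP \<Rightarrow> (kel \<Rightarrow> kel) set" where
  "Ocar Z = {f \<in> Bij (KZ Z).
      (\<forall>x\<in>KZ Z. \<forall>y\<in>KZ Z. f (kadd x y) = kadd (f x) (f y)) \<and>
      (\<forall>x\<in>KZ Z. \<forall>y\<in>KZ Z. kchi Z (f x) (f y) = kchi Z x y) \<and>
      (\<forall>x\<in>KZ Z. krk (f x) = krk x \<and> kdeg Z (f x) = kdeg Z x)}"

definition OGrp :: "dP \<Rightarrow> (kel \<Rightarrow> kel) monoid" where
  "OGrp Z = (BG Z)\<lparr>carrier := Ocar Z\<rparr>"

definition affine_roots :: "dP \<Rightarrow> kel set" where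
  "affine_roots Z = {a \<in> KZ Z. krk a = 0 \<and> kdeg Z a = 0 \<and> kchi Z a a = 2}"

definition refl :: "dP \<Rightarrow> kel \<Rightarrow> kel \<Rightarrow> kel" where
  "refl Z a = restrict (\<lambda>b. kadd b (ksmul (- kchi Z b a) a)) (KZ Z)"

definition What :: "dP \<Rightarrow> (kel \<Rightarrow> kel) set" where
  "What Z = generate (BG Z) (refl Z ` affine_roots Z)"

end

theory Submission
  imports Defs
begin

text \<open>
  O(Z) acts on the classes u of rank 1, degree 0 and chi(u, u) = 1, one of which is [O_Z].
  For a root R of Pic(Z) orthogonal to K, (0, R, c) is an affine root for every c, so a single
  reflection translates c_1(u) by any multiple of R; this moves u back to [O_Z] unless Z is the
  blow-up of the plane in one or two points, where no root has a nonzero H-coefficient.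
  An isometry fixing [O_Z] fixes the point class and restricts to an isometry of Pic(Z) fixing K.
  As in the classical description of the Weyl group via Noether's inequality, reflections in
  the Cremona roots H - E_i - E_j - E_k lower the degree of the image of H until it is H again,
  and reflections in E_i - E_j then undo the permutation of the E_i.
  For one or two points the H-coefficient of c_1(f(O_Z)) is a homomorphism from O(Z) onto the
  integers whose kernel is the affine Weyl group, split by tensoring with a line bundle of
  class H - 3E_1.
\<close>

section \<open>Groups of bijections and subgroup descent\<close>

lemma BijGroup_mult_apply:
  "f \<in> Bij S \<Longrightarrow> g \<in> Bij S \<Longrightarrow> x \<in> S \<Longrightarrow> (f \<otimes>\<^bsub>BijGroup S\<^esub> g) x = f (g x)"
  by (simp add: BijGroup_def compose_def)

lemma BijGroup_one: "\<one>\<^bsub>BijGroup S\<^esub> = (\<lambda>x\<in>S. x)"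
  by (simp add: BijGroup_def)

lemma BijGroup_one_apply: "x \<in> S \<Longrightarrow> \<one>\<^bsub>BijGroup S\<^esub> x = x"
  by (simp add: BijGroup_one)

lemma BijGroup_inv_apply: "f \<in> Bij S \<Longrightarrow> x \<in> S \<Longrightarrow> (inv\<^bsub>BijGroup S\<^esub> f) x = inv_into S f x"
  by (simp add: inv_BijGroup)

lemma Bij_inv_into:
  assumes "f \<in> Bij S" "x \<in> S"
  shows "inv_into S f x \<in> S" "f (inv_into S f x) = x" "inv_into S f (f x) = x"
  using assms by (auto simp: Bij_def bij_betw_inv_into_right bij_betw_inv_into_left inv_into_into
      dest: bij_betw_imp_surj_on)

lemma Bij_eqI: "f \<in> Bij S \<Longrightarrow> g \<in> Bij S \<Longrightarrow> (\<And>x. x \<in> S \<Longrightarrow> f x = g x) \<Longrightarrow> f = g"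
  by (rule extensionalityI[of _ S]) (auto simp: Bij_def)

lemma (in group) subgroup_cancel_left:
  assumes "subgroup H G" "s \<in> H" "x \<in> carrier G" "s \<otimes> x \<in> H"
  shows "x \<in> H"
proof -
  have "inv s \<otimes> (s \<otimes> x) \<in> H"
    using assms by (simp add: subgroup.m_closed subgroup.m_inv_closed)
  then show ?thesis
    using assms by (simp add: m_assoc[symmetric] subgroup.mem_carrier)
qed

lemma (in group) subgroup_descent:
  fixes \<mu> :: "'a \<Rightarrow> nat"
  assumes H: "subgroup H G"
    and carrier: "\<And>x. P x \<Longrightarrow> x \<in> carrier G"
    and step: "\<And>x. P x \<Longrightarrow> \<mu> x \<noteq> 0 \<Longrightarrow> \<exists>s\<in>H. P (s \<otimes> x) \<and> \<mu> (s \<otimes> x) < \<mu> x"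
    and base: "\<And>x. P x \<Longrightarrow> \<mu> x = 0 \<Longrightarrow> x \<in> H"
  shows "P x \<Longrightarrow> x \<in> H"
proof (induction "\<mu> x" arbitrary: x rule: less_induct)
  case less
  show ?case
  proof (cases "\<mu> x = 0")
    case False
    then obtain s where "s \<in> H" "P (s \<otimes> x)" "\<mu> (s \<otimes> x) < \<mu> x" using step less.prems by blast
    then show ?thesis using subgroup_cancel_left[OF H] carrier less by blast
  qed (use base less.prems in blast)
qed

lemma (in group) int_hom_int_pow:
  assumes H: "subgroup H G" and \<phi>: "\<phi> \<in> hom (G\<lparr>carrier := H\<rparr>) integer_group" and g: "g \<in> H"
  shows "\<phi> (g [^] (k::int)) = k * \<phi> g"
  using hom_int_pow[OF \<phi>, of g k] int_pow_consistent[OF H g] subgroup_imp_group[OF H] g by simp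

lemma (in group) int_hom_kernel_mult_generate:
  assumes H: "subgroup H G" and \<phi>: "\<phi> \<in> hom (G\<lparr>carrier := H\<rparr>) integer_group"
    and g: "g \<in> H" "\<phi> g = 1"
  shows "{x \<in> H. \<phi> x = 0} <#> generate G {g} = H"
proof
  have pow: "\<phi> (g [^] (k::int)) = k" for k using int_hom_int_pow[OF H \<phi> g(1)] g(2) by simp
  have pow_in_H: "g [^] (k::int) \<in> H" for k using subgroup_int_pow_closed[OF H g(1)] .
  have gG: "g \<in> carrier G" using H g(1) by (simp add: subgroup.mem_carrier)
  have gen: "generate G {g} = range (\<lambda>k::int. g [^] k)" using generate_pow[OF gG] by auto
  show "{x \<in> H. \<phi> x = 0} <#> generate G {g} \<subseteq> H"
    using pow_in_H by (auto simp: set_mult_def gen intro: subgroup.m_closed[OF H])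
  show "H \<subseteq> {x \<in> H. \<phi> x = 0} <#> generate G {g}"
  proof
    fix f assume f: "f \<in> H"
    define w where "w = f \<otimes> g [^] (- \<phi> f)"
    have w: "w \<in> H" using f pow_in_H by (simp add: w_def subgroup.m_closed[OF H])
    have "\<phi> w = \<phi> f + \<phi> (g [^] (- \<phi> f))"
      using hom_mult[OF \<phi>, of f "g [^] (- \<phi> f)"] f pow_in_H by (simp add: w_def)
    then have "w \<in> {x \<in> H. \<phi> x = 0}" using w pow by simp
    moreover have "f = w \<otimes> g [^] \<phi> f"
      using f gG subgroup.mem_carrier[OF H f] by (simp add: w_def m_assoc int_pow_mult[symmetric])
    ultimately show "f \<in> {x \<in> H. \<phi> x = 0} <#> generate G {g}"
      unfolding set_mult_def gen by blast
  qed
qed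

lemma (in group) int_hom_kernel_complement:
  assumes H: "subgroup H G" and \<phi>: "\<phi> \<in> hom (G\<lparr>carrier := H\<rparr>) integer_group"
    and g: "g \<in> H" "\<phi> g = 1"
  shows "\<And>n::nat. n > 0 \<Longrightarrow> g [^] n \<noteq> \<one>"
    and "{x \<in> H. \<phi> x = 0} \<inter> generate G {g} = {\<one>}"
    and "{x \<in> H. \<phi> x = 0} <#> generate G {g} = H"
proof -
  have pow: "\<phi> (g [^] (k::int)) = k" for k using int_hom_int_pow[OF H \<phi> g(1)] g(2) by simp
  have gG: "g \<in> carrier G" using H g(1) by (simp add: subgroup.mem_carrier)
  have one: "\<phi> \<one> = 0" using pow[of 0] by simp
  show "g [^] n \<noteq> \<one>" if "n > 0" for n :: nat
    using pow[of "int n"] one that by (auto simp: int_pow_int)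
  show "{x \<in> H. \<phi> x = 0} \<inter> generate G {g} = {\<one>}"
  proof
    show "{x \<in> H. \<phi> x = 0} \<inter> generate G {g} \<subseteq> {\<one>}"
    proof
      fix x assume x: "x \<in> {x \<in> H. \<phi> x = 0} \<inter> generate G {g}"
      then obtain k :: int where "x = g [^] k" using generate_pow[OF gG] by auto
      then show "x \<in> {\<one>}" using x pow[of k] by simp
    qed
    show "{\<one>} \<subseteq> {x \<in> H. \<phi> x = 0} \<inter> generate G {g}"
      using one subgroup.one_closed[OF H] generate.one[of G "{g}"] by simp
  qed
  show "{x \<in> H. \<phi> x = 0} <#> generate G {g} = H" by (rule int_hom_kernel_mult_generate[OF assms])
qed

lemma (in group) iso_integer_group_if_int_hom_injective:
  assumes H: "subgroup H G" and \<phi>: "\<phi> \<in> hom (G\<lparr>carrier := H\<rparr>) integer_group"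
    and g: "g \<in> H" "\<phi> g = 1" and ker: "{x \<in> H. \<phi> x = 0} = {\<one>}"
  shows "G\<lparr>carrier := H\<rparr> \<cong> integer_group"
proof -
  interpret \<phi>: group_hom "G\<lparr>carrier := H\<rparr>" integer_group \<phi>
    using subgroup_imp_group[OF H] \<phi> by (simp add: group_hom_def group_hom_axioms_def)
  have "inj_on \<phi> H" using \<phi>.trivial_ker_imp_inj ker by (simp add: kernel_def)
  moreover have "k \<in> \<phi> ` H" for k
    using image_eqI[of k \<phi> "g [^] k" H] int_hom_int_pow[OF H \<phi> g(1)] g subgroup_int_pow_closed[OF H g(1)]
    by simp
  then have "\<phi> ` H = UNIV" by blast
  ultimately show ?thesis
    using \<phi> by (intro is_isoI[of \<phi>]) (simp add: iso_def bij_betw_def)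
qed

section \<open>Integer inequalities\<close>

lemma cauchy_schwarz_int:
  fixes x :: "'a \<Rightarrow> int"
  assumes "finite A"
  shows "(\<Sum>i\<in>A. x i)^2 \<le> int (card A) * (\<Sum>i\<in>A. (x i)^2)"
proof -
  have "0 \<le> (\<Sum>i\<in>A. \<Sum>j\<in>A. (x i - x j)^2)" by (intro sum_nonneg) auto
  also have "(\<Sum>i\<in>A. \<Sum>j\<in>A. (x i - x j)^2) = (\<Sum>i\<in>A. \<Sum>j\<in>A. (x i)^2 + (x j)^2 - 2 * x i * x j)"
    by (intro sum.cong refl) (simp add: power2_diff)
  also have "\<dots> = (\<Sum>i\<in>A. \<Sum>j\<in>A. (x i)^2) + (\<Sum>i\<in>A. \<Sum>j\<in>A. (x j)^2) - 2 * (\<Sum>i\<in>A. \<Sum>j\<in>A. x i * x j)"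
    by (simp only: sum_subtractf sum.distrib sum_distrib_left mult.assoc)
  also have "(\<Sum>i\<in>A. \<Sum>j\<in>A. (x i)^2) = int (card A) * (\<Sum>i\<in>A. (x i)^2)"
    by (simp add: sum_distrib_left mult.commute)
  also have "(\<Sum>i\<in>A. \<Sum>j\<in>A. (x j)^2) = int (card A) * (\<Sum>i\<in>A. (x i)^2)"
    by simp
  also have "(\<Sum>i\<in>A. \<Sum>j\<in>A. x i * x j) = (\<Sum>i\<in>A. x i)^2"
    by (simp add: power2_eq_square sum_product)
  finally show ?thesis by linarith
qed

lemma sum_le_sum_power2_int: "(\<Sum>i\<in>A. (x i::int)) \<le> (\<Sum>i\<in>A. (x i)^2)"
proof (rule sum_mono)
  fix i
  show "x i \<le> (x i)^2"
    by (cases "x i \<le> 0") (auto simp: power2_eq_square intro: order_trans[OF _ zero_le_square])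
qed

lemma sum_remove3:
  assumes "i \<noteq> j" "i \<noteq> k" "j \<noteq> k" "{i,j,k} \<subseteq> A" "finite A"
  shows "(\<Sum>l\<in>A. f l) = f i + f j + f k + (\<Sum>l\<in>A - {i,j,k}. (f l :: int))"
proof -
  have "(\<Sum>l\<in>A. f l) = (\<Sum>l\<in>{i,j,k}. f l) + (\<Sum>l\<in>A - {i,j,k}. f l)"
    using assms by (metis sum.subset_diff add.commute finite_subset)
  then show ?thesis using assms by simp
qed

lemma sum_power2_eq_1_imp_unit:
  fixes x :: "nat \<Rightarrow> int"
  assumes "finite A" "(\<Sum>l\<in>A. (x l)^2) = 1" "(\<Sum>l\<in>A. x l) = 1"
  shows "\<exists>l\<in>A. x l = 1 \<and> (\<forall>l'\<in>A. l' \<noteq> l \<longrightarrow> x l' = 0)"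
proof -
  have "\<exists>l\<in>A. x l \<noteq> 0"
  proof (rule ccontr)
    assume "\<not> ?thesis" then have "(\<Sum>l\<in>A. (x l)^2) = 0" by simp
    with assms(2) show False by simp
  qed
  then obtain l where l: "l \<in> A" "x l \<noteq> 0" by blast
  have split2: "(\<Sum>l\<in>A. (x l)^2) = (x l)^2 + (\<Sum>l'\<in>A - {l}. (x l')^2)" using assms(1) l(1) by (simp add: sum.remove)
  have nn: "(\<Sum>l'\<in>A - {l}. (x l')^2) \<ge> 0" by (intro sum_nonneg) auto
  have "(x l)^2 \<ge> 1" using l(2) zero_less_power2[of "x l"] by linarith
  then have rest0: "(\<Sum>l'\<in>A - {l}. (x l')^2) = 0" and xl: "(x l)^2 = 1" using split2 nn assms(2) by linarith+
  have z: "\<forall>l'\<in>A. l' \<noteq> l \<longrightarrow> x l' = 0"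
  proof (intro ballI impI)
    fix l' assume "l' \<in> A" "l' \<noteq> l"
    then have "(x l')^2 = 0" using rest0 assms(1) sum_nonneg_eq_0_iff[of "A - {l}" "\<lambda>l. (x l)^2"] by auto
    then show "x l' = 0" by simp
  qed
  have "(\<Sum>l\<in>A. x l) = x l + (\<Sum>l'\<in>A - {l}. x l')" using assms(1) l(1) by (simp add: sum.remove)
  also have "(\<Sum>l'\<in>A - {l}. x l') = 0" using z by (intro sum.neutral) auto
  finally have "x l = 1" using assms(3) by simp
  then show ?thesis using l(1) z by blast
qed

text \<open>The H-coefficient a of an exceptional class a H + sum b_i E_i (square -1, degree 1) of a
  del Pezzo surface is nonnegative.\<close>

lemma exceptional_H_coeff_nonneg:
  fixes b :: "nat \<Rightarrow> int"
  assumes m: "m \<le> 8" and q: "a^2 - (\<Sum>i\<in>{1..m}. (b i)^2) = -1" and l: "3 * a + (\<Sum>i\<in>{1..m}. b i) = 1"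
  shows "a \<ge> 0"
proof (rule ccontr)
  assume "\<not> a \<ge> 0"
  then have a: "a \<le> -1" by simp
  have cs: "(\<Sum>i\<in>{1..m}. b i)^2 \<le> int m * (\<Sum>i\<in>{1..m}. (b i)^2)"
    using cauchy_schwarz_int[of "{1..m}" b] by simp
  have Q: "(\<Sum>i\<in>{1..m}. (b i)^2) = a^2 + 1" using q by simp
  have S: "(\<Sum>i\<in>{1..m}. b i) = 1 - 3 * a" using l by simp
  have "(1 - 3*a)^2 \<le> 8 * (a^2 + 1)"
  proof -
    have "(1 - 3*a)^2 \<le> int m * (a^2 + 1)" using cs Q S by simp
    also have "\<dots> \<le> 8 * (a^2 + 1)" using m by (intro mult_right_mono) (auto)
    finally show ?thesis .
  qed
  then have "(a - 7) * (a + 1) \<le> 0" by (simp add: power2_eq_square algebra_simps)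
  then have "a = -1" using a by (auto simp: mult_le_0_iff)
  then have "(\<Sum>i\<in>{1..m}. b i) = 4" "(\<Sum>i\<in>{1..m}. (b i)^2) = 2" using S Q by auto
  then show False using sum_le_sum_power2_int[of b "{1..m}"] by simp
qed

lemma noether_degree_pos:
  fixes c :: "nat \<Rightarrow> int"
  assumes "\<And>i. i \<in> {1..m} \<Longrightarrow> c i \<ge> 0" "3 * a - (\<Sum>i\<in>{1..m}. c i) = 3"
  shows "a \<ge> 1"
  using sum_nonneg[of "{1..m}" c] assms by simp

lemma noether_core:
  fixes c :: "nat \<Rightarrow> int"
  assumes A: "finite A" "{i, j, k} \<subseteq> A" "i \<noteq> j" "i \<noteq> k" "j \<noteq> k"
    and nn: "\<And>l. l \<in> A \<Longrightarrow> c l \<ge> 0"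
    and S: "(\<Sum>l\<in>A. c l) = 3 * a - 3" and Q: "(\<Sum>l\<in>A. (c l)^2) = a^2 - 1"
    and s: "c i + c j + c k \<le> a"
    and rest: "\<And>l. l \<in> A - {i, j, k} \<Longrightarrow> c l \<le> min (c i) (min (c j) (c k))"
  shows "a \<le> 1"
proof -
  define \<mu> where "\<mu> = min (c i) (min (c j) (c k))"
  let ?R = "A - {i, j, k}"
  have ijk: "0 \<le> c i" "0 \<le> c j" "0 \<le> c k" using A nn by auto
  have mu: "\<mu> \<le> c i" "\<mu> \<le> c j" "\<mu> \<le> c k" "0 \<le> \<mu>" using ijk by (auto simp: \<mu>_def)
  have S': "(\<Sum>l\<in>A. c l) = c i + c j + c k + (\<Sum>l\<in>?R. c l)"
    and Q': "(\<Sum>l\<in>A. (c l)^2) = (c i)^2 + (c j)^2 + (c k)^2 + (\<Sum>l\<in>?R. (c l)^2)"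
    using A by (auto intro!: sum_remove3)
  have "(\<Sum>l\<in>?R. (c l)^2) \<le> (\<Sum>l\<in>?R. \<mu> * c l)"
  proof (rule sum_mono)
    fix l assume "l \<in> ?R"
    then have "0 \<le> c l" "c l \<le> \<mu>" using nn rest by (auto simp: \<mu>_def)
    then show "(c l)^2 \<le> \<mu> * c l" by (simp add: power2_eq_square mult_right_mono)
  qed
  then have R: "(\<Sum>l\<in>?R. (c l)^2) \<le> \<mu> * (\<Sum>l\<in>?R. c l)" by (simp add: sum_distrib_left)
  have sq: "x^2 \<le> a * (x - \<mu>) + \<mu> * x" if "x \<le> a" "\<mu> \<le> x" for x
  proof -
    have "x * (x - \<mu>) \<le> a * (x - \<mu>)" using that by (intro mult_right_mono) auto
    then show ?thesis by (simp add: power2_eq_square algebra_simps)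
  qed
  have "a^2 - 1 \<le> a * (c i + c j + c k - 3 * \<mu>) + \<mu> * (c i + c j + c k) + \<mu> * (\<Sum>l\<in>?R. c l)"
    using Q Q' R sq[of "c i"] sq[of "c j"] sq[of "c k"] s ijk mu by (simp add: algebra_simps)
  also have "\<dots> = a * (c i + c j + c k) - 3 * \<mu>"
  proof -
    have "(\<Sum>l\<in>?R. c l) = 3 * a - 3 - (c i + c j + c k)" using S S' by linarith
    then have "\<mu> * (\<Sum>l\<in>?R. c l) = \<mu> * (3 * a - 3 - (c i + c j + c k))" by simp
    then show ?thesis by (simp add: algebra_simps)
  qed
  also have "\<dots> \<le> a * a - 3 * \<mu>"
    using s ijk by (simp add: mult_left_mono)
  finally have "\<mu> = 0" using mu by (simp add: power2_eq_square)
  then have "(\<Sum>l\<in>?R. c l) = 0" using rest nn by (intro sum.neutral) (force simp: \<mu>_def)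
  then show ?thesis using S S' s by simp
qed

lemma noether_at_least_three_points:
  fixes c :: "nat \<Rightarrow> int"
  assumes q: "a^2 - (\<Sum>i\<in>{1..m}. (c i)^2) = 1" and l: "3 * a - (\<Sum>i\<in>{1..m}. c i) = 3"
    and a2: "a \<ge> 2"
  shows "m \<ge> 3"
proof (rule ccontr)
  assume "\<not> m \<ge> 3"
  have "(3 * a - 3)^2 \<le> int m * (a^2 - 1)"
    using cauchy_schwarz_int[of "{1..m}" c] q l by (simp add: algebra_simps)
  also have "\<dots> \<le> 2 * (a^2 - 1)"
    using \<open>\<not> m \<ge> 3\<close> a2 by (intro mult_right_mono) (auto simp: power2_eq_square)
  finally have "(a - 1) * (7 * a - 11) \<le> 0" by (simp add: power2_eq_square algebra_simps)
  then show False using a2 by (simp add: mult_le_0_iff)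
qed

text \<open>Noether's inequality for the class a H - sum c_i E_i of a homaloidal net, which has
  square 1 and degree 3.\<close>

lemma noether_inequality:
  fixes c :: "nat \<Rightarrow> int"
  assumes m: "m \<le> 8" and nn: "\<And>i. i \<in> {1..m} \<Longrightarrow> c i \<ge> 0"
    and q: "a^2 - (\<Sum>i\<in>{1..m}. (c i)^2) = 1" and l: "3 * a - (\<Sum>i\<in>{1..m}. c i) = 3"
    and a2: "a \<ge> 2"
  obtains i j k where "i \<in> {1..m}" "j \<in> {1..m}" "k \<in> {1..m}" "i \<noteq> j" "i \<noteq> k" "j \<noteq> k"
    "c i + c j + c k > a"
proof -
  have S: "(\<Sum>i\<in>{1..m}. c i) = 3 * a - 3" and Q: "(\<Sum>i\<in>{1..m}. (c i)^2) = a^2 - 1"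
    using l q by simp_all
  have m3: "m \<ge> 3" by (rule noether_at_least_three_points[OF q l a2])
  define T where "T = {(i, j, k). i \<in> {1..m} \<and> j \<in> {1..m} \<and> k \<in> {1..m} \<and> i \<noteq> j \<and> i \<noteq> k \<and> j \<noteq> k}"
  define \<sigma> where "\<sigma> = (\<lambda>(i, j, k). c i + c j + c k)"
  have "finite T" by (rule finite_subset[of _ "{1..m} \<times> {1..m} \<times> {1..m}"]) (auto simp: T_def)
  moreover have "(1, 2, 3) \<in> T" using m3 by (auto simp: T_def)
  ultimately have "Max (\<sigma> ` T) \<in> \<sigma> ` T" by (intro Max_in) auto
  then obtain i j k where t: "(i, j, k) \<in> T" "\<sigma> (i, j, k) = Max (\<sigma> ` T)"
    by (metis imageE prod_cases3)
  have max: "\<sigma> t' \<le> \<sigma> (i, j, k)" if "t' \<in> T" for t'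
    using \<open>finite T\<close> that t(2) by simp
  have D: "i \<in> {1..m}" "j \<in> {1..m}" "k \<in> {1..m}" "i \<noteq> j" "i \<noteq> k" "j \<noteq> k"
    using t(1) by (auto simp: T_def)
  have "c i + c j + c k > a"
  proof (rule ccontr)
    assume "\<not> c i + c j + c k > a"
    moreover have "c l \<le> min (c i) (min (c j) (c k))" if "l \<in> {1..m} - {i, j, k}" for l
      using max[of "(l, j, k)"] max[of "(i, l, k)"] max[of "(i, j, l)"] that D
      by (auto simp: T_def \<sigma>_def)
    ultimately have "a \<le> 1" using D nn S Q by (intro noether_core[of "{1..m}" i j k c]) auto
    then show False using a2 by simp
  qed
  then show ?thesis using D that by blast
qed

lemma inter_commute: "inter Z D E = inter Z E D"
  by (cases Z) (auto simp: algebra_simps)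

lemma inter_add_left:
  assumes "length D = picrk Z" "length E = picrk Z"
  shows "inter Z (map2 (+) D E) F = inter Z D F + inter Z E F"
proof (cases Z)
  case (BlP2 m)
  have "(\<Sum>i\<in>{1..m}. map2 (+) D E ! i * F ! i) = (\<Sum>i\<in>{1..m}. D ! i * F ! i) + (\<Sum>i\<in>{1..m}. E ! i * F ! i)"
    unfolding sum.distrib[symmetric] by (rule sum.cong) (use assms BlP2 in \<open>auto simp: algebra_simps\<close>)
  then show ?thesis using assms BlP2 by (simp add: algebra_simps)
qed (use assms in \<open>simp add: algebra_simps\<close>)

lemma inter_scale_left:
  assumes "length D = picrk Z"
  shows "inter Z (map ((*) k) D) F = k * inter Z D F"
proof (cases Z)
  case (BlP2 m)
  have "(\<Sum>i\<in>{1..m}. map ((*) k) D ! i * F ! i) = k * (\<Sum>i\<in>{1..m}. D ! i * F ! i)"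
    unfolding sum_distrib_left by (rule sum.cong) (use assms BlP2 in \<open>auto simp: algebra_simps\<close>)
  then show ?thesis using assms BlP2 by (simp add: algebra_simps)
qed (use assms in \<open>simp add: algebra_simps\<close>)

lemma inter_add_right:
  "length D = picrk Z \<Longrightarrow> length E = picrk Z \<Longrightarrow> inter Z F (map2 (+) D E) = inter Z F D + inter Z F E"
  using inter_add_left[of D Z E F] by (simp add: inter_commute)

lemma inter_scale_right: "length D = picrk Z \<Longrightarrow> inter Z F (map ((*) k) D) = k * inter Z F D"
  using inter_scale_left[of D Z k F] by (simp add: inter_commute)

lemma inter_axpy_left:
  assumes "length D = picrk Z" "length L = picrk Z"
  shows "inter Z (map2 (+) D (map ((*) k) L)) F = inter Z D F + k * inter Z L F"
  using assms by (simp add: inter_add_left inter_scale_left)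

lemma inter_axpy_right:
  assumes "length D = picrk Z" "length L = picrk Z"
  shows "inter Z F (map2 (+) D (map ((*) k) L)) = inter Z F D + k * inter Z F L"
  using assms by (simp add: inter_add_right inter_scale_right)

lemma inter_zero_left: "inter Z (replicate (picrk Z) 0) E = 0"
  by (cases Z) (auto intro!: sum.neutral simp del: replicate.simps)

definition unit_vec :: "nat \<Rightarrow> nat \<Rightarrow> int list" where
  "unit_vec n i = map (\<lambda>j. if j = i then 1 else 0) [0..<n]"

lemma length_unit_vec [simp]: "length (unit_vec n i) = n"
  by (simp add: unit_vec_def)

lemma nth_unit_vec [simp]: "j < n \<Longrightarrow> unit_vec n i ! j = (if j = i then 1 else 0)"
  by (simp add: unit_vec_def)

lemma unit_vec_eq_iff:
  assumes "i < n"
  shows "unit_vec n i = unit_vec n j \<longleftrightarrow> i = j"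
proof
  assume "unit_vec n i = unit_vec n j"
  then have "unit_vec n i ! i = unit_vec n j ! i" by simp
  then show "i = j" using assms by (simp split: if_splits)
qed simp

lemma inter_unit_vec_right:
  assumes "i < picrk Z"
  shows "inter Z D (unit_vec (picrk Z) i)
    = (case Z of P1xP1 \<Rightarrow> D ! (1 - i) | BlP2 m \<Rightarrow> (if i = 0 then D ! 0 else - D ! i))"
proof (cases Z)
  case (BlP2 m)
  have "(\<Sum>j\<in>{1..m}. D ! j * unit_vec (Suc m) i ! j) = (\<Sum>j\<in>{1..m}. if j = i then D ! i else 0)"
    by (rule sum.cong) auto
  then show ?thesis using BlP2 assms by auto
qed (use assms in \<open>auto simp: less_Suc_eq\<close>)

lemma inter_unit_vec_Bl:
  "i \<le> m \<Longrightarrow> inter (BlP2 m) D (unit_vec (Suc m) i) = (if i = 0 then D ! 0 else - D ! i)"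
  using inter_unit_vec_right[of i "BlP2 m" D] by simp

lemma antiK_Bl_nth: "i \<le> m \<Longrightarrow> antiK (BlP2 m) ! i = (if i = 0 then 3 else -1)"
  by (cases i) (auto simp: nth_Cons')

lemma inter_antiK_Bl: "inter (BlP2 m) D (antiK (BlP2 m)) = 3 * D ! 0 + (\<Sum>i\<in>{1..m}. D ! i)"
proof -
  have "(\<Sum>i\<in>{1..m}. D ! i * antiK (BlP2 m) ! i) = (\<Sum>i\<in>{1..m}. - D ! i)"
    by (rule sum.cong) (auto simp: antiK_Bl_nth)
  then show ?thesis by (simp add: sum_negf)
qed

lemma inter_Bl: "inter (BlP2 m) D E = D ! 0 * E ! 0 - (\<Sum>i\<in>{1..m}. D ! i * E ! i)"
  by (simp add: inter.simps)

lemma inter_P1xP1: "inter P1xP1 D E = D ! 0 * E ! 1 + D ! 1 * E ! 0"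
  by (simp add: inter.simps)

lemma antiK_P1xP1: "antiK P1xP1 = [2, 2]"
  by (simp add: antiK.simps)

declare inter.simps [simp del] antiK.simps [simp del]

definition kO :: "dP \<Rightarrow> kel" where
  "kO Z = (1, replicate (picrk Z) 0, 1)"

definition kpt :: "dP \<Rightarrow> kel" where
  "kpt Z = (0, replicate (picrk Z) 0, 1)"

definition kE :: "dP \<Rightarrow> nat \<Rightarrow> kel" where
  "kE Z i = (0, unit_vec (picrk Z) i, 0)"

definition kc1 :: "kel \<Rightarrow> int list" where
  "kc1 x = fst (snd x)"

lemma KZ_iff [simp]: "(r, D, c) \<in> KZ Z \<longleftrightarrow> length D = picrk Z"
  by (simp add: KZ_def)

lemma KZ_E:
  assumes "x \<in> KZ Z"
  obtains r D c where "x = (r, D, c)" "length D = picrk Z"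
  using assms by (cases x) auto

lemma kO_in_KZ [simp]: "kO Z \<in> KZ Z"
  and kpt_in_KZ [simp]: "kpt Z \<in> KZ Z"
  and kE_in_KZ [simp]: "kE Z i \<in> KZ Z"
  by (simp_all add: kO_def kpt_def kE_def)

lemma kadd_simp [simp]: "kadd (r, D, c) (s, E, e) = (r + s, map2 (+) D E, c + e)"
  by (simp add: kadd_def)

lemma ksmul_simp [simp]: "ksmul k (r, D, c) = (k * r, map ((*) k) D, k * c)"
  by (simp add: ksmul_def)

lemma krk_simp [simp]: "krk (r, D, c) = r"
  by (simp add: krk_def)

lemma kc1_simp [simp]: "kc1 (r, D, c) = D"
  by (simp add: kc1_def)

lemma kdeg_simp: "kdeg Z (r, D, c) = inter Z D (antiK Z)"
  by (simp add: kdeg_def)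

lemma kchi_simp:
  "kchi Z (r, D, c) (s, E, e) = r * e + s * c - r * s - s * inter Z D (antiK Z) - inter Z D E"
  by (simp add: kchi_def)

lemma kadd_in_KZ [simp]: "x \<in> KZ Z \<Longrightarrow> y \<in> KZ Z \<Longrightarrow> kadd x y \<in> KZ Z"
  by (auto elim!: KZ_E)

lemma ksmul_in_KZ [simp]: "x \<in> KZ Z \<Longrightarrow> ksmul k x \<in> KZ Z"
  by (auto elim!: KZ_E)

lemma krk_kadd: "krk (kadd x y) = krk x + krk y"
  by (cases x; cases y) auto

lemma krk_ksmul: "krk (ksmul k x) = k * krk x"
  by (cases x) auto

lemma kdeg_kadd: "x \<in> KZ Z \<Longrightarrow> y \<in> KZ Z \<Longrightarrow> kdeg Z (kadd x y) = kdeg Z x + kdeg Z y"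
  by (auto elim!: KZ_E simp: kdeg_simp inter_add_left)

lemma kdeg_ksmul: "x \<in> KZ Z \<Longrightarrow> kdeg Z (ksmul k x) = k * kdeg Z x"
  by (auto elim!: KZ_E simp: kdeg_simp inter_scale_left)

lemma kchi_kadd_left: "x \<in> KZ Z \<Longrightarrow> y \<in> KZ Z \<Longrightarrow> kchi Z (kadd x y) z = kchi Z x z + kchi Z y z"
  by (cases z) (auto elim!: KZ_E simp: kchi_simp inter_add_left algebra_simps)

lemma kchi_ksmul_left: "x \<in> KZ Z \<Longrightarrow> kchi Z (ksmul k x) z = k * kchi Z x z"
  by (cases z) (auto elim!: KZ_E simp: kchi_simp inter_scale_left algebra_simps)

lemma kchi_kadd_right: "y \<in> KZ Z \<Longrightarrow> z \<in> KZ Z \<Longrightarrow> kchi Z x (kadd y z) = kchi Z x y + kchi Z x z"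
  by (cases x) (auto elim!: KZ_E simp: kchi_simp inter_add_right algebra_simps)

lemma kchi_ksmul_right: "y \<in> KZ Z \<Longrightarrow> kchi Z x (ksmul k y) = k * kchi Z x y"
  by (cases x) (auto elim!: KZ_E simp: kchi_simp inter_scale_right algebra_simps)

lemma kchi_antisym: "kchi Z x y - kchi Z y x = krk x * kdeg Z y - krk y * kdeg Z x"
  by (cases x; cases y) (auto simp: kchi_simp kdeg_simp inter_commute algebra_simps)

lemma kchi_kpt_left: "kchi Z (kpt Z) y = krk y"
  by (cases y) (simp add: kpt_def kchi_simp inter_zero_left)

lemma kchi_kpt_right: "kchi Z y (kpt Z) = krk y"
  by (cases y) (simp add: kpt_def kchi_simp inter_zero_left inter_commute[of Z _ "replicate _ 0"])

lemma kchi_kO_left: "kchi Z (kO Z) (s, E, e) = e"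
  by (simp add: kO_def kchi_simp inter_zero_left)

lemma kchi_kO_right: "kchi Z (r, D, c) (kO Z) = c - inter Z D (antiK Z)"
  by (simp add: kO_def kchi_simp inter_zero_left inter_commute[of Z D])

lemma kchi_kE_right: "i < picrk Z \<Longrightarrow> kchi Z (r, D, c) (kE Z i) = - inter Z D (unit_vec (picrk Z) i)"
  by (simp add: kE_def kchi_simp)

lemma KZ_eq_if_kchi_basis_eq:
  assumes u: "u \<in> KZ Z" and v: "v \<in> KZ Z"
    and pt: "kchi Z u (kpt Z) = kchi Z v (kpt Z)" and O: "kchi Z u (kO Z) = kchi Z v (kO Z)"
    and E: "\<And>i. i < picrk Z \<Longrightarrow> kchi Z u (kE Z i) = kchi Z v (kE Z i)"
  shows "u = v"
proof -
  obtain r D c where u': "u = (r, D, c)" "length D = picrk Z" using u by (rule KZ_E)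
  obtain s E e where v': "v = (s, E, e)" "length E = picrk Z" using v by (rule KZ_E)
  have r: "r = s" using pt u' v' by (simp add: kchi_kpt_right)
  have I: "inter Z D (unit_vec (picrk Z) i) = inter Z E (unit_vec (picrk Z) i)" if "i < picrk Z" for i
    using E[OF that] u' v' that by (simp add: kchi_kE_right)
  have D: "D = E"
  proof (rule nth_equalityI)
    fix i assume i: "i < length D"
    show "D ! i = E ! i"
    proof (cases Z)
      case P1xP1
      then have "1 - i < picrk Z" "1 - (1 - i) = i" using i u' by auto
      then show ?thesis using I[of "1 - i"] P1xP1 inter_unit_vec_right[of "1 - i" Z] by auto
    next
      case (BlP2 m)
      then show ?thesis using I[of i] i u' inter_unit_vec_Bl[of i m D] inter_unit_vec_Bl[of i m E]
        by (auto split: if_splits)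
    qed
  qed (use u' v' in simp)
  have "c = e" using O u' v' D by (simp add: kchi_kO_right)
  then show ?thesis using u' v' r D by simp
qed

lemma KZ_eq_if_kchi_eq:
  assumes "u \<in> KZ Z" "v \<in> KZ Z" "\<And>t. t \<in> KZ Z \<Longrightarrow> kchi Z u t = kchi Z v t"
  shows "u = v"
  by (rule KZ_eq_if_kchi_basis_eq[of u Z v]) (simp_all add: assms)

section \<open>The group O(Z)\<close>

lemma BG_carrier [simp]: "carrier (BG Z) = Bij (KZ Z)"
  by (simp add: BijGroup_def)

lemma group_BG: "group (BG Z)"
  by (rule group_BijGroup)

lemma OcarD:
  assumes "f \<in> Ocar Z"
  shows "f \<in> Bij (KZ Z)" "\<And>x. x \<in> KZ Z \<Longrightarrow> f x \<in> KZ Z"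
    "\<And>x y. x \<in> KZ Z \<Longrightarrow> y \<in> KZ Z \<Longrightarrow> f (kadd x y) = kadd (f x) (f y)"
    "\<And>x y. x \<in> KZ Z \<Longrightarrow> y \<in> KZ Z \<Longrightarrow> kchi Z (f x) (f y) = kchi Z x y"
    "\<And>x. x \<in> KZ Z \<Longrightarrow> krk (f x) = krk x"
    "\<And>x. x \<in> KZ Z \<Longrightarrow> kdeg Z (f x) = kdeg Z x"
  using assms by (auto simp: Ocar_def Bij_def dest: bij_betwE)

lemma OcarI:
  assumes "f \<in> Bij (KZ Z)"
    "\<And>x y. x \<in> KZ Z \<Longrightarrow> y \<in> KZ Z \<Longrightarrow> f (kadd x y) = kadd (f x) (f y)"
    "\<And>x y. x \<in> KZ Z \<Longrightarrow> y \<in> KZ Z \<Longrightarrow> kchi Z (f x) (f y) = kchi Z x y"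
    "\<And>x. x \<in> KZ Z \<Longrightarrow> krk (f x) = krk x"
    "\<And>x. x \<in> KZ Z \<Longrightarrow> kdeg Z (f x) = kdeg Z x"
  shows "f \<in> Ocar Z"
  using assms by (auto simp: Ocar_def)

lemma Ocar_inv_into:
  assumes f: "f \<in> Ocar Z" and x: "x \<in> KZ Z"
  obtains y where "y \<in> KZ Z" "f y = x" "inv_into (KZ Z) f x = y"
  using Bij_inv_into[OF OcarD(1)[OF f] x] by blast

lemma Ocar_subgroup: "subgroup (Ocar Z) (BG Z)"
proof (rule subgroup.intro)
  fix f g assume f: "f \<in> Ocar Z" and g: "g \<in> Ocar Z"
  note F = OcarD[OF f] and G = OcarD[OF g]
  show "f \<otimes>\<^bsub>BG Z\<^esub> g \<in> Ocar Z"
    by (rule OcarI) (auto simp: F G BijGroup_mult_apply monoid.m_closed[OF group.is_monoid[OF group_BG], simplified])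
next
  show "\<one>\<^bsub>BG Z\<^esub> \<in> Ocar Z"
    by (rule OcarI) (auto simp: BijGroup_one_apply monoid.one_closed[OF group.is_monoid[OF group_BG], simplified])
next
  fix f assume f: "f \<in> Ocar Z"
  note F = OcarD[OF f]
  have ap: "(inv\<^bsub>BG Z\<^esub> f) x = inv_into (KZ Z) f x" if "x \<in> KZ Z" for x
    using F(1) that by (simp add: BijGroup_inv_apply)
  show "inv\<^bsub>BG Z\<^esub> f \<in> Ocar Z"
  proof (rule OcarI)
    show "inv\<^bsub>BG Z\<^esub> f \<in> Bij (KZ Z)"
      using group.inv_closed[OF group_BG, of f Z] F(1) by simp
    fix x y assume x: "x \<in> KZ Z" and y: "y \<in> KZ Z"
    obtain x' where x': "x' \<in> KZ Z" "f x' = x" "inv_into (KZ Z) f x = x'" using Ocar_inv_into[OF f x] .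
    obtain y' where y': "y' \<in> KZ Z" "f y' = y" "inv_into (KZ Z) f y = y'" using Ocar_inv_into[OF f y] .
    have "inv_into (KZ Z) f (kadd x y) = kadd x' y'"
      using F(3)[OF x'(1) y'(1)] x' y' Bij_inv_into(3)[OF F(1)] by (metis kadd_in_KZ)
    then show "(inv\<^bsub>BG Z\<^esub> f) (kadd x y) = kadd ((inv\<^bsub>BG Z\<^esub> f) x) ((inv\<^bsub>BG Z\<^esub> f) y)"
      using x y x' y' by (simp add: ap)
    show "kchi Z ((inv\<^bsub>BG Z\<^esub> f) x) ((inv\<^bsub>BG Z\<^esub> f) y) = kchi Z x y"
      using x y x' y' F(4)[OF x'(1) y'(1)] by (simp add: ap)
  next
    fix x assume x: "x \<in> KZ Z"
    obtain x' where x': "x' \<in> KZ Z" "f x' = x" "inv_into (KZ Z) f x = x'" using Ocar_inv_into[OF f x] .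
    show "krk ((inv\<^bsub>BG Z\<^esub> f) x) = krk x" "kdeg Z ((inv\<^bsub>BG Z\<^esub> f) x) = kdeg Z x"
      using x x' F(5,6)[OF x'(1)] by (simp_all add: ap)
  qed
qed (auto simp: Ocar_def)

lemma OGrp_simps [simp]:
  "carrier (OGrp Z) = Ocar Z" "mult (OGrp Z) = mult (BG Z)" "one (OGrp Z) = one (BG Z)"
  by (simp_all add: OGrp_def)

lemma group_OGrp: "group (OGrp Z)"
  unfolding OGrp_def by (rule group.subgroup_imp_group[OF group_BG Ocar_subgroup])

lemma Ocar_mult_apply: "f \<in> Ocar Z \<Longrightarrow> g \<in> Ocar Z \<Longrightarrow> x \<in> KZ Z \<Longrightarrow> (f \<otimes>\<^bsub>BG Z\<^esub> g) x = f (g x)"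
  by (simp add: BijGroup_mult_apply OcarD(1))

lemma Ocar_fixes_kpt:
  assumes f: "f \<in> Ocar Z"
  shows "f (kpt Z) = kpt Z"
proof (rule KZ_eq_if_kchi_eq)
  fix t assume t: "t \<in> KZ Z"
  obtain t' where t': "t' \<in> KZ Z" "f t' = t" using Ocar_inv_into[OF f t] by blast
  show "kchi Z (f (kpt Z)) t = kchi Z (kpt Z) t"
    using OcarD(4)[OF f kpt_in_KZ t'(1)] OcarD(5)[OF f t'(1)] t' by (simp add: kchi_kpt_left)
qed (use OcarD(2)[OF f] in simp_all)

section \<open>Reflections\<close>

lemma affine_rootsD:
  assumes "a \<in> affine_roots Z"
  shows "a \<in> KZ Z" "krk a = 0" "kdeg Z a = 0" "kchi Z a a = 2" "kchi Z y a = kchi Z a y"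
  using assms kchi_antisym[of Z a y] by (simp_all add: affine_roots_def)

lemma refl_apply: "x \<in> KZ Z \<Longrightarrow> refl Z a x = kadd x (ksmul (- kchi Z x a) a)"
  by (simp add: refl_def)

lemma refl_in_KZ: "a \<in> affine_roots Z \<Longrightarrow> x \<in> KZ Z \<Longrightarrow> refl Z a x \<in> KZ Z"
  by (simp add: refl_apply affine_rootsD)

lemma kchi_refl_left:
  assumes "a \<in> affine_roots Z" "x \<in> KZ Z"
  shows "kchi Z (refl Z a x) t = kchi Z x t - kchi Z x a * kchi Z a t"
  using assms by (simp add: refl_apply kchi_kadd_left kchi_ksmul_left affine_rootsD(1))

lemma refl_refl:
  assumes a: "a \<in> affine_roots Z" and x: "x \<in> KZ Z"
  shows "refl Z a (refl Z a x) = x"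
proof (rule KZ_eq_if_kchi_eq)
  have "kchi Z (refl Z a x) a = - kchi Z x a"
    using kchi_refl_left[OF a x, of a] affine_rootsD(4)[OF a] by simp
  then show "kchi Z (refl Z a (refl Z a x)) t = kchi Z x t" for t
    using kchi_refl_left[OF a refl_in_KZ[OF a x], of t] kchi_refl_left[OF a x, of t] by simp
qed (use refl_in_KZ[OF a] x in simp_all)

lemma refl_Bij:
  assumes "a \<in> affine_roots Z"
  shows "refl Z a \<in> Bij (KZ Z)"
proof -
  have "bij_betw (refl Z a) (KZ Z) (KZ Z)"
    by (rule bij_betw_byWitness[where f'="refl Z a"]) (use assms refl_refl refl_in_KZ in blast)+
  then show ?thesis by (simp add: Bij_def refl_def)
qed

lemma refl_in_Ocar:
  assumes a: "a \<in> affine_roots Z"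
  shows "refl Z a \<in> Ocar Z"
proof (rule OcarI[OF refl_Bij[OF a]])
  note A = affine_rootsD[OF a]
  fix x y assume x: "x \<in> KZ Z" and y: "y \<in> KZ Z"
  show "refl Z a (kadd x y) = kadd (refl Z a x) (refl Z a y)"
  proof (rule KZ_eq_if_kchi_eq[of _ Z])
    fix t
    show "kchi Z (refl Z a (kadd x y)) t = kchi Z (kadd (refl Z a x) (refl Z a y)) t"
      using kchi_refl_left[OF a kadd_in_KZ[OF x y], of t] kchi_refl_left[OF a x, of t]
        kchi_refl_left[OF a y, of t] kchi_kadd_left[OF refl_in_KZ[OF a x] refl_in_KZ[OF a y], of t]
        kchi_kadd_left[OF x y, of t] kchi_kadd_left[OF x y, of a]
      by (simp add: algebra_simps)
  qed (use x y refl_in_KZ[OF a] in auto)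
  have "kchi Z x (refl Z a y) = kchi Z x y - kchi Z y a * kchi Z x a"
    using x y A(1) by (simp add: refl_apply kchi_kadd_right kchi_ksmul_right)
  moreover have "kchi Z a (refl Z a y) = - kchi Z y a"
    using kchi_refl_left[OF a y, of a] A(4) A(5)[of "refl Z a y"] by simp
  ultimately show "kchi Z (refl Z a x) (refl Z a y) = kchi Z x y"
    using x by (simp add: kchi_refl_left[OF a] algebra_simps)
next
  fix x assume x: "x \<in> KZ Z"
  show "krk (refl Z a x) = krk x" "kdeg Z (refl Z a x) = kdeg Z x"
    using x affine_rootsD(1-3)[OF a] by (simp_all add: refl_apply krk_kadd krk_ksmul kdeg_kadd kdeg_ksmul)
qed

lemma What_subset_Ocar: "What Z \<subseteq> Ocar Z"
  unfolding What_def
  by (rule group.generate_subgroup_incl[OF group_BG _ Ocar_subgroup]) (auto intro: refl_in_Ocar)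

lemma What_subgroup: "subgroup (What Z) (BG Z)"
  unfolding What_def by (rule group.generate_is_subgroup[OF group_BG]) (auto intro: refl_Bij)

lemma refl_in_What: "a \<in> affine_roots Z \<Longrightarrow> refl Z a \<in> What Z"
  unfolding What_def by (auto intro: generate.incl)

lemma What_cancel_left: "s \<in> What Z \<Longrightarrow> f \<in> Ocar Z \<Longrightarrow> s \<otimes>\<^bsub>BG Z\<^esub> f \<in> What Z \<Longrightarrow> f \<in> What Z"
  using group.subgroup_cancel_left[OF group_BG What_subgroup] OcarD(1) by simp

lemma What_mult_apply_kO:
  "s \<in> What Z \<Longrightarrow> f \<in> Ocar Z \<Longrightarrow> (s \<otimes>\<^bsub>BG Z\<^esub> f) (kO Z) = s (f (kO Z))"
  using Ocar_mult_apply[OF subsetD[OF What_subset_Ocar]] by simp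

lemma What_mult_in_Ocar: "s \<in> What Z \<Longrightarrow> f \<in> Ocar Z \<Longrightarrow> s \<otimes>\<^bsub>BG Z\<^esub> f \<in> Ocar Z"
  using subgroup.m_closed[OF Ocar_subgroup subsetD[OF What_subset_Ocar]] by simp

lemma Ocar_image_affine_root:
  assumes f: "f \<in> Ocar Z" and a: "a \<in> affine_roots Z"
  shows "f a \<in> affine_roots Z"
  using affine_rootsD(1-4)[OF a] OcarD(2,4-6)[OF f, of a] by (simp add: affine_roots_def)

lemma Ocar_conj_refl:
  assumes f: "f \<in> Ocar Z" and a: "a \<in> affine_roots Z"
  shows "f \<otimes>\<^bsub>BG Z\<^esub> refl Z a \<otimes>\<^bsub>BG Z\<^esub> inv\<^bsub>BG Z\<^esub> f = refl Z (f a)"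
proof -
  have fi: "inv\<^bsub>BG Z\<^esub> f \<in> Ocar Z" and fr: "f \<otimes>\<^bsub>BG Z\<^esub> refl Z a \<in> Ocar Z"
    using f refl_in_Ocar[OF a] Ocar_subgroup by (auto intro: subgroup.m_inv_closed subgroup.m_closed)
  note fa = Ocar_image_affine_root[OF f a] and A = affine_rootsD[OF a]
  show ?thesis
  proof (rule Bij_eqI[of _ "KZ Z"])
    show "f \<otimes>\<^bsub>BG Z\<^esub> refl Z a \<otimes>\<^bsub>BG Z\<^esub> inv\<^bsub>BG Z\<^esub> f \<in> Bij (KZ Z)"
      using subgroup.m_closed[OF Ocar_subgroup fr fi] by (simp add: OcarD(1))
    fix y assume y: "y \<in> KZ Z"
    obtain x where x: "x \<in> KZ Z" "f x = y" "inv_into (KZ Z) f y = x" using Ocar_inv_into[OF f y] .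
    have "(f \<otimes>\<^bsub>BG Z\<^esub> refl Z a \<otimes>\<^bsub>BG Z\<^esub> inv\<^bsub>BG Z\<^esub> f) y = f (refl Z a x)"
      using x y fr fi f refl_in_Ocar[OF a] OcarD(1)[OF f]
      by (simp add: Ocar_mult_apply BijGroup_inv_apply)
    also have "\<dots> = refl Z (f a) y"
    proof (rule KZ_eq_if_kchi_eq)
      fix t assume t: "t \<in> KZ Z"
      obtain t' where t': "t' \<in> KZ Z" "f t' = t" using Ocar_inv_into[OF f t] by blast
      have "kchi Z (f (refl Z a x)) t = kchi Z (refl Z a x) t'"
        using OcarD(4)[OF f refl_in_KZ[OF a x(1)] t'(1)] t'(2) by simp
      also have "\<dots> = kchi Z y t - kchi Z y (f a) * kchi Z (f a) t"
        using OcarD(4)[OF f x(1) t'(1)] OcarD(4)[OF f x(1) A(1)] OcarD(4)[OF f A(1) t'(1)] x(2) t'(2)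
        by (simp add: kchi_refl_left[OF a x(1)])
      finally show "kchi Z (f (refl Z a x)) t = kchi Z (refl Z (f a) y) t"
        by (simp add: kchi_refl_left[OF fa y])
    qed (use OcarD(2)[OF f] refl_in_KZ a fa x y in auto)
    finally show "(f \<otimes>\<^bsub>BG Z\<^esub> refl Z a \<otimes>\<^bsub>BG Z\<^esub> inv\<^bsub>BG Z\<^esub> f) y = refl Z (f a) y" .
  qed (rule refl_Bij[OF fa])
qed

lemma What_normal: "What Z \<lhd> OGrp Z"
proof -
  have sub: "refl Z ` affine_roots Z \<subseteq> Ocar Z" using refl_in_Ocar by blast
  have "What Z = generate (OGrp Z) (refl Z ` affine_roots Z)"
    unfolding What_def OGrp_def using group.generate_consistent[OF group_BG sub Ocar_subgroup] by simp
  also have "\<dots> \<lhd> OGrp Z"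
  proof (rule group.normal_generateI[OF group_OGrp])
    fix h g assume "h \<in> refl Z ` affine_roots Z" and g: "g \<in> carrier (OGrp Z)"
    then obtain a where a: "a \<in> affine_roots Z" "h = refl Z a" by blast
    have "inv\<^bsub>OGrp Z\<^esub> g = inv\<^bsub>BG Z\<^esub> g"
      using group.m_inv_consistent[OF group_BG Ocar_subgroup] g by (simp add: OGrp_def)
    then show "g \<otimes>\<^bsub>OGrp Z\<^esub> h \<otimes>\<^bsub>OGrp Z\<^esub> inv\<^bsub>OGrp Z\<^esub> g \<in> refl Z ` affine_roots Z"
      using Ocar_conj_refl[of g Z a] Ocar_image_affine_root[of g Z a] a g by simp
  qed (use sub in simp)
  finally show ?thesis .
qed

definition pic_root :: "dP \<Rightarrow> int list \<Rightarrow> bool" where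
  "pic_root Z R \<longleftrightarrow> length R = picrk Z \<and> inter Z R (antiK Z) = 0 \<and> inter Z R R = -2"

lemma affine_roots_iff: "(r, R, c) \<in> affine_roots Z \<longleftrightarrow> r = 0 \<and> pic_root Z R"
  by (auto simp: pic_root_def affine_roots_def kdeg_simp kchi_simp)

lemma affine_root_of_pic_root: "pic_root Z R \<Longrightarrow> (0, R, c) \<in> affine_roots Z"
  by (simp add: affine_roots_iff)

text \<open>Since (0, R, c) is an affine root for every c, choosing c makes a single reflection
  translate the first Chern class of a rank-one class by any multiple of R.\<close>

lemma refl_rank_one_apply:
  assumes "length D = picrk Z"
  shows "refl Z (0, R, c) (1, D, e)
    = (1, map2 (+) D (map ((*) (inter Z D R - c)) R), e + (inter Z D R - c) * c)"
  using assms by (simp add: refl_apply kchi_simp)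

lemma refl_pic_apply:
  "length E = picrk Z \<Longrightarrow> refl Z (0, R, 0) (0, E, c) = (0, map2 (+) E (map ((*) (inter Z E R)) R), c)"
  by (simp add: refl_apply kchi_simp)

lemma refl_pic_kO:
  assumes "length R = picrk Z"
  shows "refl Z (0, R, 0) (kO Z) = kO Z"
proof -
  have "map2 (+) (replicate (picrk Z) 0) (map ((*) 0) R) = replicate (picrk Z) (0::int)"
    using assms by (intro nth_equalityI) auto
  then show ?thesis by (simp add: refl_apply kO_def kchi_simp inter_zero_left)
qed

definition deg0_line_class :: "dP \<Rightarrow> kel \<Rightarrow> bool" where
  "deg0_line_class Z u \<longleftrightarrow> u \<in> KZ Z \<and> krk u = 1 \<and> kdeg Z u = 0 \<and> kchi Z u u = 1"

lemma deg0_line_class_image_kO: "f \<in> Ocar Z \<Longrightarrow> deg0_line_class Z (f (kO Z))"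
  by (simp add: deg0_line_class_def OcarD kO_def kdeg_simp kchi_simp inter_zero_left)

lemma deg0_line_classE:
  assumes "deg0_line_class Z u"
  obtains D e where "u = (1, D, e)" "length D = picrk Z" "inter Z D (antiK Z) = 0"
  using assms by (cases u) (auto simp: deg0_line_class_def kdeg_simp)

lemma deg0_line_class_eq_kO:
  assumes "deg0_line_class Z (1, D, e)" "\<And>i. i < picrk Z \<Longrightarrow> D ! i = 0"
  shows "(1, D, e) = kO Z"
proof -
  have D: "D = replicate (picrk Z) 0"
    using assms by (intro nth_equalityI) (auto simp: deg0_line_class_def)
  then have "kchi Z (1, D, e) (1, D, e) = 2 * e - 1" by (simp add: kchi_simp inter_zero_left)
  then have "e = 1" using assms(1) by (simp add: deg0_line_class_def)
  then show ?thesis using D by (simp add: kO_def)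
qed

section \<open>The stabilizer of the structure sheaf\<close>

definition stabO :: "dP \<Rightarrow> (kel \<Rightarrow> kel) set" where
  "stabO Z = {f \<in> Ocar Z. f (kO Z) = kO Z}"

definition pic_map :: "dP \<Rightarrow> (kel \<Rightarrow> kel) \<Rightarrow> int list \<Rightarrow> int list" where
  "pic_map Z f E = kc1 (f (0, E, 0))"

lemma stabOD: "f \<in> stabO Z \<Longrightarrow> f \<in> Ocar Z" "f \<in> stabO Z \<Longrightarrow> f (kO Z) = kO Z"
  by (simp_all add: stabO_def)

lemma stabO_in_carrier: "f \<in> stabO Z \<Longrightarrow> f \<in> carrier (BG Z)"
  by (simp add: stabO_def OcarD(1))

lemma mult_in_stabO_iff:
  assumes "s \<in> Ocar Z" "f \<in> stabO Z"
  shows "s \<otimes>\<^bsub>BG Z\<^esub> f \<in> stabO Z \<longleftrightarrow> s (kO Z) = kO Z"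
  using assms subgroup.m_closed[OF Ocar_subgroup] by (auto simp: stabO_def Ocar_mult_apply)

lemma inv_in_stabO:
  assumes "f \<in> stabO Z"
  shows "inv\<^bsub>BG Z\<^esub> f \<in> stabO Z"
  using assms subgroup.m_inv_closed[OF Ocar_subgroup] Bij_inv_into(3)[OF OcarD(1), of f Z "kO Z"]
  by (auto simp: stabO_def BijGroup_inv_apply OcarD(1))

text \<open>Preserving the rank and chi(O_Z, -), an isometry fixing [O_Z] permutes the classes
  (0, E, 0); pic_map is the induced isometry of Pic(Z), which fixes K.\<close>

lemma pic_map_apply:
  assumes f: "f \<in> stabO Z" and E: "length E = picrk Z"
  shows "f (0, E, 0) = (0, pic_map Z f E, 0)" "length (pic_map Z f E) = picrk Z"
proof -
  note F = OcarD[OF stabOD(1)[OF f]]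
  have x: "(0, E, 0) \<in> KZ Z" using E by simp
  obtain s E' e where y: "f (0, E, 0) = (s, E', e)" "length E' = picrk Z"
    using F(2)[OF x] by (rule KZ_E)
  have "s = 0" using F(5)[OF x] y by simp
  moreover have "e = 0" using F(4)[OF kO_in_KZ x] y stabOD(2)[OF f] by (simp add: kchi_kO_left)
  ultimately show "f (0, E, 0) = (0, pic_map Z f E, 0)" "length (pic_map Z f E) = picrk Z"
    using y by (simp_all add: pic_map_def)
qed

lemma pic_map_inter:
  assumes f: "f \<in> stabO Z" and "length E = picrk Z" "length F = picrk Z"
  shows "inter Z (pic_map Z f E) (pic_map Z f F) = inter Z E F"
  using OcarD(4)[OF stabOD(1)[OF f], of "(0, E, 0)" "(0, F, 0)"] assms
  by (simp add: pic_map_apply kchi_simp)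

lemma pic_map_antiK:
  assumes f: "f \<in> stabO Z" and "length E = picrk Z"
  shows "inter Z (pic_map Z f E) (antiK Z) = inter Z E (antiK Z)"
  using OcarD(6)[OF stabOD(1)[OF f], of "(0, E, 0)"] assms by (simp add: pic_map_apply kdeg_simp)

lemma pic_map_inj:
  assumes f: "f \<in> stabO Z" and "length E = picrk Z" "length F = picrk Z"
    and "pic_map Z f E = pic_map Z f F"
  shows "E = F"
proof -
  have "inj_on f (KZ Z)" using OcarD(1)[OF stabOD(1)[OF f]] by (simp add: Bij_def bij_betw_def)
  moreover have "f (0, E, 0) = f (0, F, 0)" using assms pic_map_apply(1)[OF f] by simp
  ultimately show ?thesis using assms by (auto dest: inj_onD)
qed

lemma pic_map_pic_map_inv:
  assumes f: "f \<in> stabO Z" and E: "length E = picrk Z"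
  shows "pic_map Z f (pic_map Z (inv\<^bsub>BG Z\<^esub> f) E) = E"
proof -
  note fi = inv_in_stabO[OF f]
  have "f ((inv\<^bsub>BG Z\<^esub> f) (0, E, 0)) = (0, E, 0)"
    using Bij_inv_into(2)[OF OcarD(1)[OF stabOD(1)[OF f]]] E
    by (simp add: BijGroup_inv_apply OcarD(1)[OF stabOD(1)[OF f]])
  then show ?thesis using pic_map_apply[OF fi E] pic_map_apply[OF f pic_map_apply(2)[OF fi E]] by simp
qed

lemma pic_map_refl_mult:
  assumes R: "pic_root Z R" and f: "f \<in> stabO Z" and E: "length E = picrk Z"
  shows "pic_map Z (refl Z (0, R, 0) \<otimes>\<^bsub>BG Z\<^esub> f) E
    = map2 (+) (pic_map Z f E) (map ((*) (inter Z (pic_map Z f E) R)) R)"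
proof -
  have "(refl Z (0, R, 0) \<otimes>\<^bsub>BG Z\<^esub> f) (0, E, 0) = refl Z (0, R, 0) (0, pic_map Z f E, 0)"
    using pic_map_apply[OF f E] E refl_in_Ocar[OF affine_root_of_pic_root[OF R]] stabOD(1)[OF f]
    by (simp add: Ocar_mult_apply)
  then show ?thesis
    by (simp add: pic_map_def[of Z "refl Z (0, R, 0) \<otimes>\<^bsub>BG Z\<^esub> f"] refl_pic_apply pic_map_apply(2)[OF f E])
qed

lemma refl_mult_in_stabO:
  assumes R: "pic_root Z R" and f: "f \<in> stabO Z"
  shows "refl Z (0, R, 0) \<otimes>\<^bsub>BG Z\<^esub> f \<in> stabO Z"
  using R f refl_in_Ocar[OF affine_root_of_pic_root[OF R]]
  by (simp add: mult_in_stabO_iff refl_pic_kO pic_root_def)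

lemma stabO_eq_one:
  assumes f: "f \<in> stabO Z"
    and E: "\<And>i. i < picrk Z \<Longrightarrow> pic_map Z f (unit_vec (picrk Z) i) = unit_vec (picrk Z) i"
  shows "f = \<one>\<^bsub>BG Z\<^esub>"
proof -
  note F = OcarD[OF stabOD(1)[OF f]]
  have fE: "f (kE Z i) = kE Z i" if "i < picrk Z" for i
    using pic_map_apply(1)[OF f, of "unit_vec (picrk Z) i"] E[OF that] by (simp add: kE_def)
  have "f x = x" if x: "x \<in> KZ Z" for x
  proof (rule KZ_eq_if_kchi_basis_eq[of _ Z])
    show "kchi Z (f x) (kpt Z) = kchi Z x (kpt Z)"
      using F(4)[OF x kpt_in_KZ] Ocar_fixes_kpt[OF stabOD(1)[OF f]] by simp
    show "kchi Z (f x) (kO Z) = kchi Z x (kO Z)"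
      using F(4)[OF x kO_in_KZ] stabOD(2)[OF f] by simp
    show "kchi Z (f x) (kE Z i) = kchi Z x (kE Z i)" if "i < picrk Z" for i
      using F(4)[OF x kE_in_KZ, of i] fE[OF that] by simp
  qed (use x F(2) in auto)
  then show ?thesis
    using F(1) by (intro Bij_eqI[of _ "KZ Z"]) (simp_all add: BijGroup_one id_Bij)
qed

section \<open>Blow-ups of the plane\<close>

definition vec :: "nat \<Rightarrow> (nat \<Rightarrow> int) \<Rightarrow> int list" where
  "vec m g = map g [0..<Suc m]"

lemma length_vec [simp]: "length (vec m g) = Suc m"
  by (simp add: vec_def)

lemma nth_vec [simp]: "i \<le> m \<Longrightarrow> vec m g ! i = g i"
  by (simp add: vec_def nth_append less_Suc_eq_le)

lemma vec_cong: "(\<And>p. p \<le> m \<Longrightarrow> g p = g' p) \<Longrightarrow> vec m g = vec m g'"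
  by (simp add: vec_def)

text \<open>In the basis H, E_1, ..., E_m of Pic(Z): the root E_i - E_j and the root
  H - E_i - E_j - E_k of the quadratic Cremona transformation.\<close>

definition Rdiff :: "nat \<Rightarrow> nat \<Rightarrow> nat \<Rightarrow> int list" where
  "Rdiff m i j = vec m (\<lambda>l. of_bool (l = i) - of_bool (l = j))"

definition Rcremona :: "nat \<Rightarrow> nat \<Rightarrow> nat \<Rightarrow> nat \<Rightarrow> int list" where
  "Rcremona m i j k = vec m (\<lambda>l. of_bool (l = 0) - of_bool (l = i) - of_bool (l = j) - of_bool (l = k))"

lemma length_Rdiff [simp]: "length (Rdiff m i j) = Suc m"
  by (simp add: Rdiff_def)

lemma nth_Rdiff: "p \<le> m \<Longrightarrow> Rdiff m i j ! p = of_bool (p = i) - of_bool (p = j)"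
  by (simp add: Rdiff_def)

lemma length_Rcremona [simp]: "length (Rcremona m i j k) = Suc m"
  by (simp add: Rcremona_def)

lemma nth_Rcremona:
  "p \<le> m \<Longrightarrow> Rcremona m i j k ! p = of_bool (p = 0) - of_bool (p = i) - of_bool (p = j) - of_bool (p = k)"
  by (simp add: Rcremona_def)

lemma inter_Rdiff_right:
  "i \<in> {1..m} \<Longrightarrow> j \<in> {1..m} \<Longrightarrow> inter (BlP2 m) D (Rdiff m i j) = D ! j - D ! i"
  by (simp add: inter_Bl Rdiff_def right_diff_distrib sum_subtractf)

lemma inter_Rcremona_right:
  "i \<in> {1..m} \<Longrightarrow> j \<in> {1..m} \<Longrightarrow> k \<in> {1..m} \<Longrightarrow>
    inter (BlP2 m) D (Rcremona m i j k) = D ! 0 + D ! i + D ! j + D ! k"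
  by (simp add: inter_Bl Rcremona_def right_diff_distrib sum_subtractf sum_negf)

lemma pic_root_Rdiff:
  assumes "i \<in> {1..m}" "j \<in> {1..m}" "i \<noteq> j"
  shows "pic_root (BlP2 m) (Rdiff m i j)"
  using assms inter_antiK_Bl[of m "Rdiff m i j"] inter_Rdiff_right[of i m j "Rdiff m i j"]
  by (simp add: pic_root_def Rdiff_def sum_subtractf)

lemma pic_root_Rcremona:
  assumes "i \<in> {1..m}" "j \<in> {1..m}" "k \<in> {1..m}" "i \<noteq> j" "i \<noteq> k" "j \<noteq> k"
  shows "pic_root (BlP2 m) (Rcremona m i j k)"
  using assms inter_antiK_Bl[of m "Rcremona m i j k"] inter_Rcremona_right[of i m j k "Rcremona m i j k"]
  by (simp add: pic_root_def Rcremona_def sum_subtractf sum_negf)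

abbreviation Hvec :: "nat \<Rightarrow> int list" where
  "Hvec m \<equiv> unit_vec (Suc m) 0"

abbreviation Evec :: "nat \<Rightarrow> nat \<Rightarrow> int list" where
  "Evec m i \<equiv> unit_vec (Suc m) i"

lemma unit_vec_eq_vec: "unit_vec (Suc m) i = vec m (\<lambda>p. of_bool (p = i))"
  by (rule nth_equalityI) (auto simp: less_Suc_eq_le)

lemma vec_nth_eq: "length Y = Suc m \<Longrightarrow> vec m (\<lambda>p. Y ! p) = Y"
  by (rule nth_equalityI) (auto simp: less_Suc_eq_le)

lemma inter_Hvec_Evec:
  assumes "i \<in> {1..m}"
  shows "inter (BlP2 m) (Hvec m) (Hvec m) = 1" "inter (BlP2 m) (Hvec m) (antiK (BlP2 m)) = 3"
    "inter (BlP2 m) (Evec m i) (Evec m i) = -1" "inter (BlP2 m) (Evec m i) (Hvec m) = 0"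
    "inter (BlP2 m) (Evec m i) (antiK (BlP2 m)) = 1"
  using assms inter_unit_vec_Bl[of 0 m] inter_unit_vec_Bl[of i m]
  by (simp_all add: inter_antiK_Bl)

lemma pic_map_refl_Rdiff_mult:
  assumes f: "f \<in> stabO (BlP2 m)" and il: "i \<in> {1..m}" "l \<in> {1..m}" "i \<noteq> l"
    and X: "length X = Suc m"
  defines "s \<equiv> refl (BlP2 m) (0, Rdiff m i l, 0)"
  shows "pic_map (BlP2 m) f X ! i = pic_map (BlP2 m) f X ! l \<Longrightarrow>
      pic_map (BlP2 m) (s \<otimes>\<^bsub>BG (BlP2 m)\<^esub> f) X = pic_map (BlP2 m) f X"
    and "pic_map (BlP2 m) f X = Evec m l \<Longrightarrow> pic_map (BlP2 m) (s \<otimes>\<^bsub>BG (BlP2 m)\<^esub> f) X = Evec m i"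
proof -
  define Y where "Y = pic_map (BlP2 m) f X"
  have Y: "length Y = Suc m" using pic_map_apply(2)[OF f, of X] X by (simp add: Y_def)
  have act: "pic_map (BlP2 m) (s \<otimes>\<^bsub>BG (BlP2 m)\<^esub> f) X
      = vec m (\<lambda>p. Y ! p + (Y ! l - Y ! i) * (of_bool (p = i) - of_bool (p = l)))"
    using pic_map_refl_mult[OF pic_root_Rdiff[OF il] f, of X] Y X il
    by (intro nth_equalityI) (auto simp: s_def Y_def inter_Rdiff_right nth_Rdiff less_Suc_eq_le)
  show "pic_map (BlP2 m) (s \<otimes>\<^bsub>BG (BlP2 m)\<^esub> f) X = pic_map (BlP2 m) f X"
    if "pic_map (BlP2 m) f X ! i = pic_map (BlP2 m) f X ! l"
    using that by (simp add: act vec_nth_eq[OF Y] Y_def[symmetric])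
  show "pic_map (BlP2 m) (s \<otimes>\<^bsub>BG (BlP2 m)\<^esub> f) X = Evec m i" if "pic_map (BlP2 m) f X = Evec m l"
    using that il by (auto simp: act Y_def[symmetric] unit_vec_eq_vec intro!: vec_cong)
qed

lemma pic_map_Evec:
  assumes f: "f \<in> stabO (BlP2 m)" and H: "pic_map (BlP2 m) f (Hvec m) = Hvec m" and i: "i \<in> {1..m}"
  obtains l where "l \<in> {1..m}" "pic_map (BlP2 m) f (Evec m i) = Evec m l"
proof -
  define e where "e = pic_map (BlP2 m) f (Evec m i)"
  have len: "length e = Suc m" using pic_map_apply(2)[OF f, of "Evec m i"] by (simp add: e_def)
  have "inter (BlP2 m) e (Hvec m) = 0"
    using pic_map_inter[OF f, of "Evec m i" "Hvec m"] H inter_Hvec_Evec[OF i] by (simp add: e_def)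
  then have e0: "e ! 0 = 0" using inter_unit_vec_Bl[of 0 m e] by simp
  have "inter (BlP2 m) e e = -1"
    using pic_map_inter[OF f, of "Evec m i" "Evec m i"] inter_Hvec_Evec[OF i] by (simp add: e_def)
  then have sq: "(\<Sum>l\<in>{1..m}. (e ! l)^2) = 1" using e0 by (simp add: inter_Bl power2_eq_square)
  have "inter (BlP2 m) e (antiK (BlP2 m)) = 1"
    using pic_map_antiK[OF f, of "Evec m i"] inter_Hvec_Evec[OF i] by (simp add: e_def)
  then have sm: "(\<Sum>l\<in>{1..m}. e ! l) = 1" using e0 inter_antiK_Bl[of m e] by simp
  obtain l where l: "l \<in> {1..m}" "e ! l = 1" "\<forall>l'\<in>{1..m}. l' \<noteq> l \<longrightarrow> e ! l' = 0"
    using sum_power2_eq_1_imp_unit[of "{1..m}" "\<lambda>l. e ! l", OF _ sq sm] by auto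
  have "e = Evec m l"
  proof (rule nth_equalityI)
    fix p assume "p < length e"
    then show "e ! p = Evec m l ! p" using len e0 l by (cases "p = 0") auto
  qed (simp add: len)
  then show ?thesis using l(1) that by (simp add: e_def)
qed

text \<open>The multiplicities -h_i are nonnegative because h.E_i is the H-coefficient of the
  exceptional class f^-1(E_i).\<close>

lemma pic_map_Hvec:
  assumes m: "m \<le> 8" and f: "f \<in> stabO (BlP2 m)"
  defines "h \<equiv> pic_map (BlP2 m) f (Hvec m)"
  shows "length h = Suc m" "(h ! 0)^2 - (\<Sum>i\<in>{1..m}. (- h ! i)^2) = 1"
    "3 * h ! 0 - (\<Sum>i\<in>{1..m}. - h ! i) = 3" "\<And>i. i \<in> {1..m} \<Longrightarrow> - h ! i \<ge> 0"
proof -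
  show "length h = Suc m" using pic_map_apply(2)[OF f, of "Hvec m"] by (simp add: h_def)
  show "(h ! 0)^2 - (\<Sum>i\<in>{1..m}. (- h ! i)^2) = 1"
    using pic_map_inter[OF f, of "Hvec m" "Hvec m"] inter_Hvec_Evec(1)[of 1 m]
    by (simp add: h_def inter_Bl power2_eq_square)
  show "3 * h ! 0 - (\<Sum>i\<in>{1..m}. - h ! i) = 3"
    using pic_map_antiK[OF f, of "Hvec m"] inter_Hvec_Evec(2)[of 1 m]
    by (simp add: h_def inter_antiK_Bl sum_negf)
  fix i assume i: "i \<in> {1..m}"
  define e where "e = pic_map (BlP2 m) (inv\<^bsub>BG (BlP2 m)\<^esub> f) (Evec m i)"
  note fi = inv_in_stabO[OF f]
  have le: "length e = Suc m" using pic_map_apply(2)[OF fi, of "Evec m i"] by (simp add: e_def)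
  have "(e ! 0)^2 - (\<Sum>l\<in>{1..m}. (e ! l)^2) = -1"
    using pic_map_inter[OF fi, of "Evec m i" "Evec m i"] inter_Hvec_Evec(3)[OF i]
    by (simp add: e_def inter_Bl power2_eq_square)
  moreover have "3 * e ! 0 + (\<Sum>l\<in>{1..m}. e ! l) = 1"
    using pic_map_antiK[OF fi, of "Evec m i"] inter_Hvec_Evec(5)[OF i]
    by (simp add: e_def inter_antiK_Bl)
  ultimately have e0: "e ! 0 \<ge> 0" using exceptional_H_coeff_nonneg[OF m] by blast
  have "inter (BlP2 m) h (Evec m i) = inter (BlP2 m) (Hvec m) e"
    using pic_map_inter[OF f, of "Hvec m" e] pic_map_pic_map_inv[OF f, of "Evec m i"] le
    by (simp add: h_def e_def)
  also have "\<dots> = e ! 0" using inter_unit_vec_Bl[of 0 m e] inter_commute[of "BlP2 m" "Hvec m" e] by simp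
  finally show "- h ! i \<ge> 0" using inter_unit_vec_Bl[of i m h] i e0 by simp
qed

definition moved_E :: "nat \<Rightarrow> (kel \<Rightarrow> kel) \<Rightarrow> nat set" where
  "moved_E m f = {i \<in> {1..m}. pic_map (BlP2 m) f (Evec m i) \<noteq> Evec m i}"

lemma stabO_transposition_step:
  assumes f: "f \<in> stabO (BlP2 m)" and H: "pic_map (BlP2 m) f (Hvec m) = Hvec m" and i: "i \<in> moved_E m f"
  obtains s where "s \<in> What (BlP2 m)" "s \<otimes>\<^bsub>BG (BlP2 m)\<^esub> f \<in> stabO (BlP2 m)"
    "pic_map (BlP2 m) (s \<otimes>\<^bsub>BG (BlP2 m)\<^esub> f) (Hvec m) = Hvec m"
    "moved_E m (s \<otimes>\<^bsub>BG (BlP2 m)\<^esub> f) \<subseteq> moved_E m f - {i}"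
proof -
  let ?Z = "BlP2 m"
  have i: "i \<in> {1..m}" "pic_map ?Z f (Evec m i) \<noteq> Evec m i" using i by (simp_all add: moved_E_def)
  obtain l where l: "l \<in> {1..m}" "pic_map ?Z f (Evec m i) = Evec m l" using pic_map_Evec[OF f H i(1)] .
  have il: "i \<noteq> l" using i l by auto
  note R = pic_root_Rdiff[OF i(1) l(1) il]
  define s where "s = refl ?Z (0, Rdiff m i l, 0)"
  note act = pic_map_refl_Rdiff_mult[OF f i(1) l(1) il, folded s_def]
  have fixed: "pic_map ?Z (s \<otimes>\<^bsub>BG ?Z\<^esub> f) (Evec m p) = Evec m p"
    if "p \<le> m" "pic_map ?Z f (Evec m p) = Evec m p" "p \<noteq> i" "p \<noteq> l" for p
    using act(1)[of "Evec m p"] that i(1) l(1) by simp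
  have "moved_E m (s \<otimes>\<^bsub>BG ?Z\<^esub> f) \<subseteq> moved_E m f - {i}"
  proof
    fix k assume k: "k \<in> moved_E m (s \<otimes>\<^bsub>BG ?Z\<^esub> f)"
    then have ki: "k \<noteq> i" using act(2)[of "Evec m i"] l(2) by (auto simp: moved_E_def)
    have "Evec m i \<noteq> Evec m l" using il i(1) by (simp add: unit_vec_eq_iff)
    then have "pic_map ?Z f (Evec m l) \<noteq> Evec m l"
      using pic_map_inj[OF f, of "Evec m i" "Evec m l"] l(2) by auto
    then show "k \<in> moved_E m f - {i}"
      using fixed[of k] k ki by (cases "k = l") (auto simp: moved_E_def)
  qed
  moreover have "s \<in> What ?Z" unfolding s_def by (rule refl_in_What[OF affine_root_of_pic_root[OF R]])
  moreover have "s \<otimes>\<^bsub>BG ?Z\<^esub> f \<in> stabO ?Z" unfolding s_def by (rule refl_mult_in_stabO[OF R f])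
  moreover have "pic_map ?Z (s \<otimes>\<^bsub>BG ?Z\<^esub> f) (Hvec m) = Hvec m" using fixed[of 0] H i(1) l(1) by simp
  ultimately show ?thesis using that by blast
qed

lemma stabO_fixing_Hvec_in_What:
  assumes "f \<in> stabO (BlP2 m)" "pic_map (BlP2 m) f (Hvec m) = Hvec m"
  shows "f \<in> What (BlP2 m)"
proof (rule group.subgroup_descent[OF group_BG What_subgroup,
      where P = "\<lambda>f. f \<in> stabO (BlP2 m) \<and> pic_map (BlP2 m) f (Hvec m) = Hvec m"
      and \<mu> = "\<lambda>f. card (moved_E m f)"])
  fix f assume P: "f \<in> stabO (BlP2 m) \<and> pic_map (BlP2 m) f (Hvec m) = Hvec m" and "card (moved_E m f) \<noteq> 0"
  then obtain i where i: "i \<in> moved_E m f" by fastforce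
  obtain s where s: "s \<in> What (BlP2 m)" "s \<otimes>\<^bsub>BG (BlP2 m)\<^esub> f \<in> stabO (BlP2 m)"
    "pic_map (BlP2 m) (s \<otimes>\<^bsub>BG (BlP2 m)\<^esub> f) (Hvec m) = Hvec m"
    "moved_E m (s \<otimes>\<^bsub>BG (BlP2 m)\<^esub> f) \<subseteq> moved_E m f - {i}"
    using stabO_transposition_step[of f m i] P i by blast
  have "card (moved_E m (s \<otimes>\<^bsub>BG (BlP2 m)\<^esub> f)) \<le> card (moved_E m f - {i})"
    using s(4) by (intro card_mono) (simp_all add: moved_E_def)
  also have "\<dots> < card (moved_E m f)"
    using i by (intro card_Diff1_less) (simp_all add: moved_E_def)
  finally show "\<exists>s\<in>What (BlP2 m). (s \<otimes>\<^bsub>BG (BlP2 m)\<^esub> f \<in> stabO (BlP2 m) \<and>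
      pic_map (BlP2 m) (s \<otimes>\<^bsub>BG (BlP2 m)\<^esub> f) (Hvec m) = Hvec m) \<and>
      card (moved_E m (s \<otimes>\<^bsub>BG (BlP2 m)\<^esub> f)) < card (moved_E m f)"
    using s by blast
next
  fix f assume P: "f \<in> stabO (BlP2 m) \<and> pic_map (BlP2 m) f (Hvec m) = Hvec m"
    and "card (moved_E m f) = 0"
  then have "pic_map (BlP2 m) f (unit_vec (picrk (BlP2 m)) i) = unit_vec (picrk (BlP2 m)) i"
    if "i < picrk (BlP2 m)" for i
    using that by (cases "i = 0") (auto simp: moved_E_def)
  then show "f \<in> What (BlP2 m)"
    using stabO_eq_one[of f "BlP2 m"] P subgroup.one_closed[OF What_subgroup] by auto
qed (use assms in \<open>auto dest: stabO_in_carrier\<close>)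

lemma pic_map_Hvec_eq_Hvec:
  assumes m: "m \<le> 8" and f: "f \<in> stabO (BlP2 m)" and h0: "pic_map (BlP2 m) f (Hvec m) ! 0 \<le> 1"
  shows "pic_map (BlP2 m) f (Hvec m) = Hvec m"
proof -
  define h where "h = pic_map (BlP2 m) f (Hvec m)"
  note hf = pic_map_Hvec[OF m f, folded h_def]
  have "h ! 0 = 1" using h0 noether_degree_pos[OF hf(4) hf(3)] by (simp add: h_def)
  then have "(\<Sum>i\<in>{1..m}. (- h ! i)^2) = 0" using hf(2) by simp
  then have h_i: "h ! i = 0" if "i \<in> {1..m}" for i
    using that sum_nonneg_eq_0_iff[of "{1..m}" "\<lambda>i. (- h ! i)^2"] by simp
  show ?thesis unfolding h_def[symmetric]
  proof (rule nth_equalityI)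
    fix p assume "p < length h"
    then show "h ! p = Hvec m ! p" using hf(1) \<open>h ! 0 = 1\<close> h_i by (cases "p = 0") auto
  qed (simp add: hf(1))
qed

lemma stabO_Bl_subset_What:
  assumes m: "m \<le> 8" and f: "f \<in> stabO (BlP2 m)"
  shows "f \<in> What (BlP2 m)"
proof -
  let ?Z = "BlP2 m"
  define h0 where "h0 f = pic_map ?Z f (Hvec m) ! 0" for f
  show ?thesis
  proof (rule group.subgroup_descent[OF group_BG What_subgroup, where P = "\<lambda>f. f \<in> stabO ?Z"
        and \<mu> = "\<lambda>f. nat (h0 f - 1)"])
    fix f assume f: "f \<in> stabO ?Z" and "nat (h0 f - 1) \<noteq> 0"
    then have "h0 f \<ge> 2" by simp
    note hf = pic_map_Hvec[OF m f]
    obtain i j k where ijk: "i \<in> {1..m}" "j \<in> {1..m}" "k \<in> {1..m}" "i \<noteq> j" "i \<noteq> k" "j \<noteq> k"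
      "- pic_map ?Z f (Hvec m) ! i - pic_map ?Z f (Hvec m) ! j - pic_map ?Z f (Hvec m) ! k > h0 f"
      using noether_inequality[OF m hf(4) hf(2) hf(3)] \<open>h0 f \<ge> 2\<close> by (auto simp: h0_def)
    note R = pic_root_Rcremona[OF ijk(1-6)]
    define s where "s = refl ?Z (0, Rcremona m i j k, 0)"
    have sf: "s \<otimes>\<^bsub>BG ?Z\<^esub> f \<in> stabO ?Z" using refl_mult_in_stabO[OF R f] by (simp add: s_def)
    have "h0 (s \<otimes>\<^bsub>BG ?Z\<^esub> f) < h0 f"
      using pic_map_refl_mult[OF R f, of "Hvec m"] hf(1) ijk
      by (simp add: s_def h0_def inter_Rcremona_right nth_Rcremona)
    moreover have "h0 (s \<otimes>\<^bsub>BG ?Z\<^esub> f) \<ge> 1"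
      using noether_degree_pos[OF pic_map_Hvec(4)[OF m sf] pic_map_Hvec(3)[OF m sf]] by (simp add: h0_def)
    ultimately show "\<exists>s\<in>What ?Z. s \<otimes>\<^bsub>BG ?Z\<^esub> f \<in> stabO ?Z \<and> nat (h0 (s \<otimes>\<^bsub>BG ?Z\<^esub> f) - 1) < nat (h0 f - 1)"
      using sf refl_in_What[OF affine_root_of_pic_root[OF R]] by (auto simp: s_def)
  next
    fix f assume f: "f \<in> stabO ?Z" and "nat (h0 f - 1) = 0"
    then have "pic_map ?Z f (Hvec m) = Hvec m" using pic_map_Hvec_eq_Hvec[OF m f] by (simp add: h0_def)
    then show "f \<in> What ?Z" by (rule stabO_fixing_Hvec_in_What[OF f])
  qed (use f in \<open>auto dest: stabO_in_carrier\<close>)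
qed

lemma deg0_line_class_Bl_eq_kO:
  assumes u: "deg0_line_class (BlP2 m) (1, D, e)" and D: "D ! 0 = 0" "\<And>j. j \<in> {2..m} \<Longrightarrow> D ! j = 0"
  shows "(1, D, e) = kO (BlP2 m)"
proof (rule deg0_line_class_eq_kO[OF u])
  have "D ! 1 = 0" if "1 \<le> m"
  proof -
    have "{1..m} = insert 1 {2..m}" using that by auto
    then show ?thesis using u D by (simp add: deg0_line_class_def kdeg_simp inter_antiK_Bl)
  qed
  then show "D ! i = 0" if "i < picrk (BlP2 m)" for i
    using that D by (cases "i \<le> 1") (auto simp: le_Suc_eq)
qed

lemma Bl_in_What_if_H_coeff_zero:
  assumes m: "m \<le> 8" and f: "f \<in> Ocar (BlP2 m)" and f0: "kc1 (f (kO (BlP2 m))) ! 0 = 0"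
  shows "f \<in> What (BlP2 m)"
proof -
  let ?Z = "BlP2 m" and ?P = "\<lambda>g. g \<in> Ocar (BlP2 m) \<and> kc1 (g (kO (BlP2 m))) ! 0 = 0"
  define \<mu> where "\<mu> g = (\<Sum>j\<in>{2..m}. nat \<bar>kc1 (g (kO ?Z)) ! j\<bar>)" for g
  show ?thesis
  proof (rule group.subgroup_descent[OF group_BG What_subgroup, where P = ?P and \<mu> = \<mu>])
    fix g assume P: "?P g" and "\<mu> g \<noteq> 0"
    obtain D e where u: "g (kO ?Z) = (1, D, e)" "length D = picrk ?Z"
      using deg0_line_class_image_kO[OF conjunct1[OF P]] by (rule deg0_line_classE)
    obtain j where j: "j \<in> {2..m}" "D ! j \<noteq> 0" using \<open>\<mu> g \<noteq> 0\<close> u by (auto simp: \<mu>_def)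
    have j1: "1 \<in> {1..m}" "j \<in> {1..m}" "1 \<noteq> j" using j by auto
    define s where "s = refl ?Z (0, Rdiff m 1 j, inter ?Z D (Rdiff m 1 j) - D ! j)"
    have s: "s \<in> What ?Z" unfolding s_def
      by (rule refl_in_What[OF affine_root_of_pic_root[OF pic_root_Rdiff[OF j1]]])
    have D': "kc1 ((s \<otimes>\<^bsub>BG ?Z\<^esub> g) (kO ?Z)) ! p = D ! p - D ! j * (of_bool (p = j) - of_bool (p = 1))"
      if "p \<le> m" for p
      using that u j1 unfolding What_mult_apply_kO[OF s conjunct1[OF P]]
      by (simp add: s_def refl_rank_one_apply nth_Rdiff algebra_simps)
    have "?P (s \<otimes>\<^bsub>BG ?Z\<^esub> g)" using D'[of 0] j1 P u What_mult_in_Ocar[OF s] by auto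
    moreover have "\<mu> (s \<otimes>\<^bsub>BG ?Z\<^esub> g) < \<mu> g"
      unfolding \<mu>_def using D' j u by (intro sum_strict_mono_ex1) auto
    ultimately show "\<exists>s\<in>What ?Z. ?P (s \<otimes>\<^bsub>BG ?Z\<^esub> g) \<and> \<mu> (s \<otimes>\<^bsub>BG ?Z\<^esub> g) < \<mu> g"
      using s by blast
  next
    fix g assume P: "?P g" and "\<mu> g = 0"
    have u: "deg0_line_class ?Z (g (kO ?Z))" using deg0_line_class_image_kO P by blast
    then obtain D e where D: "g (kO ?Z) = (1, D, e)" "length D = picrk ?Z" by (rule deg0_line_classE)
    have "g (kO ?Z) = kO ?Z"
      using \<open>\<mu> g = 0\<close> u P D deg0_line_class_Bl_eq_kO[of m D e] by (simp add: \<mu>_def)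
    then show "g \<in> What ?Z" using stabO_Bl_subset_What[OF m] P by (simp add: stabO_def)
  qed (use f f0 in \<open>auto dest: OcarD(1)\<close>)
qed

lemma Bl_Ocar_eq_What:
  assumes m: "m \<le> 8" "m \<noteq> 1" "m \<noteq> 2"
  shows "Ocar (BlP2 m) = What (BlP2 m)"
proof
  let ?Z = "BlP2 m"
  show "Ocar ?Z \<subseteq> What ?Z"
  proof
    fix f assume f: "f \<in> Ocar ?Z"
    obtain D e where u: "f (kO ?Z) = (1, D, e)" "length D = picrk ?Z" "inter ?Z D (antiK ?Z) = 0"
      using deg0_line_class_image_kO[OF f] by (rule deg0_line_classE)
    show "f \<in> What ?Z"
    proof (cases "m = 0")
      case True
      then show ?thesis using Bl_in_What_if_H_coeff_zero[OF m(1) f] u by (simp add: inter_antiK_Bl)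
    next
      case False
      then have ijk: "1 \<in> {1..m}" "2 \<in> {1..m}" "3 \<in> {1..m}" using m by auto
      define R where "R = Rcremona m 1 2 3"
      define s where "s = refl ?Z (0, R, inter ?Z D R + D ! 0)"
      have s: "s \<in> What ?Z"
        unfolding s_def R_def by (rule refl_in_What[OF affine_root_of_pic_root[OF pic_root_Rcremona]]) (use ijk in auto)
      have "kc1 ((s \<otimes>\<^bsub>BG ?Z\<^esub> f) (kO ?Z)) ! 0 = 0"
        using u unfolding What_mult_apply_kO[OF s f] by (simp add: s_def refl_rank_one_apply R_def nth_Rcremona)
      then have "s \<otimes>\<^bsub>BG ?Z\<^esub> f \<in> What ?Z"
        using Bl_in_What_if_H_coeff_zero[OF m(1) What_mult_in_Ocar[OF s f]] by simp
      then show ?thesis using What_cancel_left[OF s f] by simp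
    qed
  qed
qed (rule What_subset_Ocar)

section \<open>The quadric\<close>

lemma pic_root_P1xP1: "pic_root P1xP1 [1, -1]"
  by (simp add: pic_root_def inter_P1xP1 antiK_P1xP1)

lemma length_2_list_eq: "length D = 2 \<Longrightarrow> D = [D ! 0, D ! 1]"
  by (rule nth_equalityI) (auto simp: less_2_cases_iff)

lemma stabO_P1xP1_eq_one:
  assumes f: "f \<in> stabO P1xP1" and F: "pic_map P1xP1 f [1, 0] = [1, 0]"
  shows "f = \<one>\<^bsub>BG P1xP1\<^esub>"
proof -
  define h where "h = pic_map P1xP1 f [0, 1]"
  have "length h = 2" using pic_map_apply(2)[OF f, of "[0, 1]"] by (simp add: h_def)
  moreover have "h ! 1 = 1" "h ! 0 * h ! 1 = 0"
    using pic_map_inter[OF f, of "[1, 0]" "[0, 1]"] pic_map_inter[OF f, of "[0, 1]" "[0, 1]"] F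
    by (simp_all add: h_def inter_P1xP1)
  ultimately have "h = [0, 1]" using length_2_list_eq[of h] by simp
  moreover have "unit_vec 2 0 = [1, 0]" "unit_vec 2 (Suc 0) = [0, 1]"
    by (simp_all add: unit_vec_def upt_rec)
  ultimately show ?thesis using f F by (intro stabO_eq_one) (auto simp: h_def less_2_cases_iff)
qed

lemma stabO_P1xP1_subset_What:
  assumes f: "f \<in> stabO P1xP1"
  shows "f \<in> What P1xP1"
proof -
  let ?Z = P1xP1
  define h where "h = pic_map ?Z f [1, 0]"
  have "length h = 2" using pic_map_apply(2)[OF f, of "[1, 0]"] by (simp add: h_def)
  moreover have "h ! 0 * h ! 1 = 0" "h ! 0 + h ! 1 = 1"
    using pic_map_inter[OF f, of "[1, 0]" "[1, 0]"] pic_map_antiK[OF f, of "[1, 0]"]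
    by (simp_all add: h_def inter_P1xP1 antiK_P1xP1)
  ultimately have "h = [1, 0] \<or> h = [0, 1]" using length_2_list_eq[of h] by auto
  then show ?thesis
  proof
    assume "h = [1, 0]"
    then show ?thesis
      using stabO_P1xP1_eq_one[OF f] subgroup.one_closed[OF What_subgroup] by (simp add: h_def)
  next
    assume h: "h = [0, 1]"
    define s where "s = refl ?Z (0, [1, -1], 0)"
    have s: "s \<in> What ?Z" unfolding s_def by (rule refl_in_What[OF affine_root_of_pic_root[OF pic_root_P1xP1]])
    have "pic_map ?Z (s \<otimes>\<^bsub>BG ?Z\<^esub> f) [1, 0] = [1, 0]"
      using pic_map_refl_mult[OF pic_root_P1xP1 f, of "[1, 0]"] h by (simp add: s_def h_def inter_P1xP1)
    then have "s \<otimes>\<^bsub>BG ?Z\<^esub> f \<in> What ?Z"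
      using stabO_P1xP1_eq_one[OF refl_mult_in_stabO[OF pic_root_P1xP1 f]] subgroup.one_closed[OF What_subgroup]
      by (simp add: s_def)
    then show ?thesis using What_cancel_left[OF s stabOD(1)[OF f]] by simp
  qed
qed

lemma P1xP1_Ocar_eq_What: "Ocar P1xP1 = What P1xP1"
proof
  let ?Z = P1xP1
  show "Ocar ?Z \<subseteq> What ?Z"
  proof
    fix f assume f: "f \<in> Ocar ?Z"
    obtain D e where u: "f (kO ?Z) = (1, D, e)" "length D = picrk ?Z" "inter ?Z D (antiK ?Z) = 0"
      using deg0_line_class_image_kO[OF f] by (rule deg0_line_classE)
    define s where "s = refl ?Z (0, [1, -1], inter ?Z D [1, -1] + D ! 0)"
    have s: "s \<in> What ?Z" unfolding s_def by (rule refl_in_What[OF affine_root_of_pic_root[OF pic_root_P1xP1]])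
    have sf: "s \<otimes>\<^bsub>BG ?Z\<^esub> f \<in> Ocar ?Z" by (rule What_mult_in_Ocar[OF s f])
    note sf_deg0 = deg0_line_class_image_kO[OF sf]
    obtain D' e' where u': "(s \<otimes>\<^bsub>BG ?Z\<^esub> f) (kO ?Z) = (1, D', e')"
      using sf_deg0 by (rule deg0_line_classE)
    have "D' = map2 (+) D (map ((*) (- D ! 0)) [1, -1])"
      using u' u What_mult_apply_kO[OF s f] by (simp add: s_def refl_rank_one_apply)
    then have "D' ! i = 0" if "i < picrk ?Z" for i
      using u(2,3) that by (auto simp: inter_P1xP1 antiK_P1xP1 less_2_cases_iff)
    then have "(s \<otimes>\<^bsub>BG ?Z\<^esub> f) (kO ?Z) = kO ?Z"
      using deg0_line_class_eq_kO[of ?Z D' e'] sf_deg0 u' by simp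
    then have "s \<otimes>\<^bsub>BG ?Z\<^esub> f \<in> What ?Z"
      using stabO_P1xP1_subset_What sf by (simp add: stabO_def)
    then show "f \<in> What ?Z" using What_cancel_left[OF s f] by simp
  qed
qed (rule What_subset_Ocar)

section \<open>The blow-up of the plane in one or two points\<close>

definition H_shift :: "dP \<Rightarrow> (kel \<Rightarrow> kel) \<Rightarrow> int \<Rightarrow> bool" where
  "H_shift Z f t \<longleftrightarrow> f \<in> Ocar Z \<and> (\<forall>x\<in>KZ Z. kc1 (f x) ! 0 = kc1 x ! 0 + t * krk x)"

definition Hdeg :: "dP \<Rightarrow> (kel \<Rightarrow> kel) \<Rightarrow> int" where
  "Hdeg Z f = kc1 (f (kO Z)) ! 0"

lemma H_shift_mult:
  assumes f: "H_shift Z f t" and g: "H_shift Z g u"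
  shows "H_shift Z (f \<otimes>\<^bsub>BG Z\<^esub> g) (t + u)"
proof -
  have fO: "f \<in> Ocar Z" and gO: "g \<in> Ocar Z" using f g by (simp_all add: H_shift_def)
  have "kc1 ((f \<otimes>\<^bsub>BG Z\<^esub> g) x) ! 0 = kc1 x ! 0 + (t + u) * krk x" if x: "x \<in> KZ Z" for x
    using f g OcarD(2,5)[OF gO x] x by (simp add: H_shift_def Ocar_mult_apply[OF fO gO x] algebra_simps)
  then show ?thesis using subgroup.m_closed[OF Ocar_subgroup fO gO] by (simp add: H_shift_def)
qed

lemma H_shift_inv:
  assumes f: "H_shift Z f t"
  shows "H_shift Z (inv\<^bsub>BG Z\<^esub> f) (- t)"
proof -
  have fO: "f \<in> Ocar Z" using f by (simp add: H_shift_def)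
  have "kc1 ((inv\<^bsub>BG Z\<^esub> f) x) ! 0 = kc1 x ! 0 - t * krk x" if x: "x \<in> KZ Z" for x
  proof -
    obtain y where y: "y \<in> KZ Z" "f y = x" "inv_into (KZ Z) f x = y" using Ocar_inv_into[OF fO x] .
    have "kc1 (f y) ! 0 = kc1 y ! 0 + t * krk y" using f y(1) by (simp add: H_shift_def)
    then show ?thesis using y OcarD(5)[OF fO y(1)] x by (simp add: BijGroup_inv_apply OcarD(1)[OF fO])
  qed
  then show ?thesis using subgroup.m_inv_closed[OF Ocar_subgroup fO] by (simp add: H_shift_def)
qed

lemma H_shift_int_pow:
  assumes g: "H_shift Z g 1"
  shows "H_shift Z (g [^]\<^bsub>BG Z\<^esub> (k::int)) k"
proof -
  have nat_pow: "H_shift Z (g [^]\<^bsub>BG Z\<^esub> n) (int n)" for n :: nat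
  proof (induction n)
    case 0
    show ?case using subgroup.one_closed[OF Ocar_subgroup] by (simp add: H_shift_def BijGroup_one_apply)
  next
    case (Suc n)
    have "int n + 1 = int (Suc n)" by simp
    then show ?case using H_shift_mult[OF Suc g] by (simp only: nat_pow_Suc)
  qed
  have "g \<in> carrier (BG Z)" using g by (simp add: H_shift_def OcarD(1))
  then show ?thesis
    using nat_pow H_shift_inv[OF nat_pow] group.int_pow_neg_int[OF group_BG]
    by (cases k rule: int_cases2) (simp_all add: int_pow_int)
qed

lemma Hdeg_eq_if_H_shift: "H_shift Z f t \<Longrightarrow> 0 < picrk Z \<Longrightarrow> Hdeg Z f = t"
  by (simp add: H_shift_def Hdeg_def kO_def)

lemma affine_root_Bl_H_coeff:
  assumes m: "m \<le> 2" and a: "(r, R, c) \<in> affine_roots (BlP2 m)"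
  shows "R ! 0 = 0"
proof -
  have R: "inter (BlP2 m) R (antiK (BlP2 m)) = 0" "inter (BlP2 m) R R = -2"
    using a by (simp_all add: affine_roots_iff pic_root_def)
  have l: "3 * R ! 0 + (\<Sum>i\<in>{1..m}. R ! i) = 0" using R(1) by (simp add: inter_antiK_Bl)
  have q: "(\<Sum>i\<in>{1..m}. (R ! i)^2) = (R ! 0)^2 + 2" using R(2) by (simp add: inter_Bl power2_eq_square)
  have "(\<Sum>i\<in>{1..m}. R ! i) = - (3 * R ! 0)" using l by simp
  then have "(3 * R ! 0)^2 \<le> int m * ((R ! 0)^2 + 2)"
    using cauchy_schwarz_int[of "{1..m}" "\<lambda>i. R ! i"] q by simp
  also have "\<dots> \<le> 2 * ((R ! 0)^2 + 2)" using m by (intro mult_right_mono) auto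
  finally have "(R ! 0)^2 < 1" by (simp add: power_mult_distrib)
  then show ?thesis using zero_less_power2[of "R ! 0"] by linarith
qed

lemma affine_roots_Bl1: "affine_roots (BlP2 1) = {}"
proof -
  have "False" if "(r, R, c) \<in> affine_roots (BlP2 1)" for r R c
  proof -
    have "R ! 0 = 0" using affine_root_Bl_H_coeff[OF _ that] by simp
    moreover have "inter (BlP2 1) R (antiK (BlP2 1)) = 0" and R2: "inter (BlP2 1) R R = -2"
      using that by (simp_all add: affine_roots_iff pic_root_def)
    then have "3 * R ! 0 + R ! 1 = 0" unfolding inter_antiK_Bl by simp
    moreover have "R ! 0 * R ! 0 - R ! 1 * R ! 1 = -2" using R2 unfolding inter_Bl by simp
    ultimately show False by simp
  qed
  then show ?thesis by force
qed

lemma H_shift_refl_Bl: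
  assumes m: "m \<le> 2" and a: "a \<in> affine_roots (BlP2 m)"
  shows "H_shift (BlP2 m) (refl (BlP2 m) a) 0"
proof -
  obtain r R c where rRc: "a = (r, R, c)" by (rule prod_cases3)
  have "kc1 (refl (BlP2 m) a x) ! 0 = kc1 x ! 0" if "x \<in> KZ (BlP2 m)" for x
    using that affine_root_Bl_H_coeff[OF m a[unfolded rRc]] affine_rootsD(1)[OF a]
    by (auto elim!: KZ_E simp: rRc refl_apply)
  then show ?thesis using refl_in_Ocar[OF a] by (simp add: H_shift_def)
qed

lemma What_H_shift_zero:
  assumes m: "m \<le> 2" and w: "w \<in> What (BlP2 m)"
  shows "H_shift (BlP2 m) w 0"
  using w unfolding What_def
proof (induction rule: generate.induct)
  case one
  show ?case using subgroup.one_closed[OF Ocar_subgroup] by (simp add: H_shift_def BijGroup_one_apply)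
next
  case (incl h)
  then show ?case using H_shift_refl_Bl[OF m] by blast
next
  case (inv h)
  then show ?case using H_shift_inv[OF H_shift_refl_Bl[OF m]] by force
next
  case (eng h1 h2)
  then show ?case using H_shift_mult by fastforce
qed

text \<open>Tensor product with a line bundle of class L orthogonal to K, where L.L = 2q; the new
  Euler characteristic comes from Riemann-Roch.\<close>

definition twist :: "dP \<Rightarrow> int list \<Rightarrow> int \<Rightarrow> kel \<Rightarrow> kel" where
  "twist Z L q = restrict (\<lambda>(r, D, c). (r, map2 (+) D (map ((*) r) L), c + inter Z L D + r * q)) (KZ Z)"

lemma twist_apply:
  "length D = picrk Z \<Longrightarrow> twist Z L q (r, D, c) = (r, map2 (+) D (map ((*) r) L), c + inter Z L D + r * q)"
  by (simp add: twist_def)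

lemma twist_in_KZ: "length L = picrk Z \<Longrightarrow> x \<in> KZ Z \<Longrightarrow> twist Z L q x \<in> KZ Z"
  by (auto elim!: KZ_E simp: twist_apply)

lemma twist_twist_neg:
  assumes L: "length L = picrk Z" "inter Z L L = 2 * q" and x: "x \<in> KZ Z"
  shows "twist Z (map ((*) (-1)) L) q (twist Z L q x) = x"
proof -
  obtain r D c where x': "x = (r, D, c)" "length D = picrk Z" using x by (rule KZ_E)
  have "inter Z (map ((*) (-1)) L) (map2 (+) D (map ((*) r) L)) = - inter Z L D - r * (2 * q)"
    using x' L by (simp add: inter_axpy_right inter_scale_left)
  moreover have "map2 (+) (map2 (+) D (map ((*) r) L)) (map ((*) r) (map ((*) (-1)) L)) = D"
    using x' L by (intro nth_equalityI) auto
  ultimately show ?thesis using x' L by (simp add: twist_apply algebra_simps)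
qed

lemma twist_in_Ocar:
  assumes L: "length L = picrk Z" "inter Z L (antiK Z) = 0" "inter Z L L = 2 * q"
  shows "twist Z L q \<in> Ocar Z"
proof (rule OcarI)
  have L': "length (map ((*) (-1)) L) = picrk Z" "inter Z (map ((*) (-1)) L) (map ((*) (-1)) L) = 2 * q"
    using L by (simp_all add: inter_scale_left inter_scale_right)
  have "map ((*) (-1)) (map ((*) (-1)) L) = L" by (induct L) auto
  then have "bij_betw (twist Z L q) (KZ Z) (KZ Z)"
    using twist_twist_neg[OF L(1,3)] twist_twist_neg[OF L'] twist_in_KZ L(1) L'(1)
    by (intro bij_betw_byWitness[where f'="twist Z (map ((*) (-1)) L) q"]) auto
  then show "twist Z L q \<in> Bij (KZ Z)" by (simp add: Bij_def twist_def)
next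
  fix x y assume x: "x \<in> KZ Z" and y: "y \<in> KZ Z"
  obtain r D c where x': "x = (r, D, c)" "length D = picrk Z" using x by (rule KZ_E)
  obtain s E e where y': "y = (s, E, e)" "length E = picrk Z" using y by (rule KZ_E)
  have "map2 (+) (map2 (+) D E) (map ((*) (r + s)) L)
      = map2 (+) (map2 (+) D (map ((*) r) L)) (map2 (+) E (map ((*) s) L))"
    using x' y' L by (intro nth_equalityI) (auto simp: algebra_simps)
  then show "twist Z L q (kadd x y) = kadd (twist Z L q x) (twist Z L q y)"
    using x' y' by (simp add: twist_apply inter_add_right algebra_simps)
  have "inter Z (map2 (+) D (map ((*) r) L)) (map2 (+) E (map ((*) s) L))
      = inter Z D E + s * inter Z D L + r * inter Z L E + r * s * (2 * q)"
    using x' y' L by (simp add: inter_axpy_left inter_axpy_right algebra_simps)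
  then show "kchi Z (twist Z L q x) (twist Z L q y) = kchi Z x y"
    using x' y' L by (simp add: twist_apply kchi_simp inter_axpy_left inter_commute[of Z D L] algebra_simps)
next
  fix x assume x: "x \<in> KZ Z"
  obtain r D c where x': "x = (r, D, c)" "length D = picrk Z" using x by (rule KZ_E)
  show "krk (twist Z L q x) = krk x" "kdeg Z (twist Z L q x) = kdeg Z x"
    using x' L by (simp_all add: twist_apply kdeg_simp inter_axpy_left)
qed

lemma H_shift_twist:
  assumes "length L = picrk Z" "inter Z L (antiK Z) = 0" "inter Z L L = 2 * q" "0 < picrk Z"
  shows "H_shift Z (twist Z L q) (L ! 0)"
  using assms twist_in_Ocar[OF assms(1-3)] by (auto elim!: KZ_E simp: H_shift_def twist_apply)

lemma exists_H_shift_one: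
  assumes "1 \<le> m"
  obtains g where "H_shift (BlP2 m) g 1"
proof -
  define L where "L = vec m (\<lambda>p. of_bool (p = 0) - 3 * of_bool (p = 1))"
  have L_nth: "L ! i = (if i = 1 then -3 else 0)" if "i \<in> {1..m}" for i using that by (simp add: L_def)
  have "(\<Sum>i\<in>{1..m}. L ! i) = (\<Sum>i\<in>{1..m}. if i = 1 then -3 else 0)" by (rule sum.cong) (simp_all add: L_nth)
  then have K: "inter (BlP2 m) L (antiK (BlP2 m)) = 0" using assms by (simp add: inter_antiK_Bl L_def)
  have "(\<Sum>i\<in>{1..m}. L ! i * L ! i) = (\<Sum>i\<in>{1..m}. if i = 1 then 9 else 0)" by (rule sum.cong) (simp_all add: L_nth)
  then have LL: "inter (BlP2 m) L L = 2 * -4" using assms by (simp add: inter_Bl L_def)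
  have "L ! 0 = 1" "length L = picrk (BlP2 m)" by (simp_all add: L_def)
  then show ?thesis using H_shift_twist[of L "BlP2 m" "-4"] K LL that by simp
qed

lemma Ocar_H_shift_Hdeg:
  assumes m: "1 \<le> m" "m \<le> 2" and f: "f \<in> Ocar (BlP2 m)"
  shows "H_shift (BlP2 m) f (Hdeg (BlP2 m) f)"
proof -
  let ?Z = "BlP2 m" and ?G = "BG (BlP2 m)"
  interpret G: group ?G by (rule group_BG)
  obtain g where g: "H_shift ?Z g 1" using exists_H_shift_one[OF m(1)] .
  define k where "k = Hdeg ?Z f"
  have gk: "H_shift ?Z (g [^]\<^bsub>?G\<^esub> k) k" "H_shift ?Z (g [^]\<^bsub>?G\<^esub> (- k)) (- k)"
    using H_shift_int_pow[OF g] by blast+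
  have gkO: "g [^]\<^bsub>?G\<^esub> (- k) \<in> Ocar ?Z" using gk(2) by (simp add: H_shift_def)
  define w where "w = g [^]\<^bsub>?G\<^esub> (- k) \<otimes>\<^bsub>?G\<^esub> f"
  have wO: "w \<in> Ocar ?Z" using subgroup.m_closed[OF Ocar_subgroup gkO f] by (simp add: w_def)
  have "kc1 (w (kO ?Z)) ! 0 = kc1 (f (kO ?Z)) ! 0 - k * krk (f (kO ?Z))"
    using gk(2) OcarD(2)[OF f kO_in_KZ] by (simp add: w_def Ocar_mult_apply[OF gkO f] H_shift_def)
  also have "\<dots> = 0" using OcarD(5)[OF f kO_in_KZ] by (simp add: k_def Hdeg_def kO_def)
  finally have "w \<in> What ?Z" using Bl_in_What_if_H_coeff_zero[OF _ wO] m by simp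
  then have "H_shift ?Z w 0" using What_H_shift_zero[OF m(2)] by blast
  then have shift: "H_shift ?Z (g [^]\<^bsub>?G\<^esub> k \<otimes>\<^bsub>?G\<^esub> w) k" using H_shift_mult[OF gk(1)] by fastforce
  have "f = g [^]\<^bsub>?G\<^esub> k \<otimes>\<^bsub>?G\<^esub> w"
  proof -
    have gG: "g \<in> carrier ?G" and fG: "f \<in> carrier ?G"
      using g f by (simp_all add: H_shift_def OcarD(1))
    have "g [^]\<^bsub>?G\<^esub> k \<otimes>\<^bsub>?G\<^esub> w = (g [^]\<^bsub>?G\<^esub> k \<otimes>\<^bsub>?G\<^esub> g [^]\<^bsub>?G\<^esub> (- k)) \<otimes>\<^bsub>?G\<^esub> f"
      using G.m_assoc[OF G.int_pow_closed[OF gG] G.int_pow_closed[OF gG] fG] by (simp add: w_def)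
    also have "\<dots> = f" using fG by (simp add: G.int_pow_mult[OF gG, symmetric])
    finally show ?thesis by simp
  qed
  then show ?thesis unfolding k_def[symmetric] using shift by simp
qed

lemma Hdeg_hom:
  assumes "1 \<le> m" "m \<le> 2"
  shows "Hdeg (BlP2 m) \<in> hom (OGrp (BlP2 m)) integer_group"
proof (rule homI)
  fix f g assume "f \<in> carrier (OGrp (BlP2 m))" "g \<in> carrier (OGrp (BlP2 m))"
  then show "Hdeg (BlP2 m) (f \<otimes>\<^bsub>OGrp (BlP2 m)\<^esub> g) = Hdeg (BlP2 m) f \<otimes>\<^bsub>integer_group\<^esub> Hdeg (BlP2 m) g"
    using H_shift_mult[OF Ocar_H_shift_Hdeg Ocar_H_shift_Hdeg] assms Hdeg_eq_if_H_shift by simp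
qed simp

lemma What_eq_Hdeg_kernel:
  assumes "m \<le> 2"
  shows "What (BlP2 m) = {f \<in> Ocar (BlP2 m). Hdeg (BlP2 m) f = 0}"
  using assms What_subset_Ocar What_H_shift_zero Hdeg_eq_if_H_shift Bl_in_What_if_H_coeff_zero
  by (auto simp: Hdeg_def)

lemma exists_Hdeg_one:
  assumes "1 \<le> m"
  obtains g where "g \<in> Ocar (BlP2 m)" "Hdeg (BlP2 m) g = 1"
proof -
  obtain g where g: "H_shift (BlP2 m) g 1" using exists_H_shift_one[OF assms] .
  then have "g \<in> Ocar (BlP2 m)" "Hdeg (BlP2 m) g = 1" using Hdeg_eq_if_H_shift by (simp_all add: H_shift_def)
  then show ?thesis by (rule that)
qed

lemma Bl_What_complement:
  assumes m: "1 \<le> m" "m \<le> 2"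
  obtains g where "g \<in> Ocar (BlP2 m)" "\<And>n::nat. n > 0 \<Longrightarrow> g [^]\<^bsub>BG (BlP2 m)\<^esub> n \<noteq> \<one>\<^bsub>BG (BlP2 m)\<^esub>"
    "What (BlP2 m) \<inter> generate (BG (BlP2 m)) {g} = {\<one>\<^bsub>BG (BlP2 m)\<^esub>}"
    "What (BlP2 m) <#>\<^bsub>BG (BlP2 m)\<^esub> generate (BG (BlP2 m)) {g} = Ocar (BlP2 m)"
proof -
  obtain g where g: "g \<in> Ocar (BlP2 m)" "Hdeg (BlP2 m) g = 1" using exists_Hdeg_one[OF m(1)] .
  show ?thesis
    using that[OF g(1)] What_eq_Hdeg_kernel[OF m(2)] Hdeg_hom[OF m] g
      group.int_hom_kernel_complement[OF group_BG Ocar_subgroup[of "BlP2 m"], where \<phi> = "Hdeg (BlP2 m)" and g = g]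
    by (simp add: OGrp_def)
qed

lemma What_Bl1: "What (BlP2 1) = {\<one>\<^bsub>BG (BlP2 1)\<^esub>}"
  unfolding What_def affine_roots_Bl1 by (simp add: group.generate_empty[OF group_BG])

lemma OGrp_Bl1_iso_integer_group: "OGrp (BlP2 1) \<cong> integer_group"
proof -
  obtain g where g: "g \<in> Ocar (BlP2 1)" "Hdeg (BlP2 1) g = 1" using exists_Hdeg_one[of 1] by auto
  show ?thesis
    using group.iso_integer_group_if_int_hom_injective[OF group_BG Ocar_subgroup[of "BlP2 1"],
        where \<phi> = "Hdeg (BlP2 1)" and g = g] Hdeg_hom[of 1] g What_eq_Hdeg_kernel[of 1] What_Bl1
    by (simp add: OGrp_def)
qed

theorem proposition3p15:
  assumes "delPezzo Z"
  shows "(Z \<noteq> BlP2 1 \<and> Z \<noteq> BlP2 2 \<longrightarrow> Ocar Z = What Z)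
    \<and> (Z = BlP2 2 \<longrightarrow>
         What Z \<lhd> OGrp Z \<and>
         (\<exists>g\<in>Ocar Z. (\<forall>n::nat. n > 0 \<longrightarrow> g [^]\<^bsub>BG Z\<^esub> n \<noteq> \<one>\<^bsub>BG Z\<^esub>) \<and>
            What Z \<inter> generate (BG Z) {g} = {\<one>\<^bsub>BG Z\<^esub>} \<and>
            What Z <#>\<^bsub>BG Z\<^esub> generate (BG Z) {g} = Ocar Z))
    \<and> (Z = BlP2 1 \<longrightarrow> What Z = {\<one>\<^bsub>BG Z\<^esub>} \<and> OGrp Z \<cong> integer_group)"
proof (intro conjI impI)
  assume "Z \<noteq> BlP2 1 \<and> Z \<noteq> BlP2 2"
  then show "Ocar Z = What Z"
    using assms Bl_Ocar_eq_What P1xP1_Ocar_eq_What by (cases Z) (auto simp: delPezzo_def)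
next
  assume Z: "Z = BlP2 2"
  show "What Z \<lhd> OGrp Z" by (rule What_normal)
  obtain g where "g \<in> Ocar Z" "\<And>n::nat. n > 0 \<Longrightarrow> g [^]\<^bsub>BG Z\<^esub> n \<noteq> \<one>\<^bsub>BG Z\<^esub>"
    "What Z \<inter> generate (BG Z) {g} = {\<one>\<^bsub>BG Z\<^esub>}" "What Z <#>\<^bsub>BG Z\<^esub> generate (BG Z) {g} = Ocar Z"
    using Bl_What_complement[of 2] Z by auto
  then show "\<exists>g\<in>Ocar Z. (\<forall>n::nat. n > 0 \<longrightarrow> g [^]\<^bsub>BG Z\<^esub> n \<noteq> \<one>\<^bsub>BG Z\<^esub>) \<and>
      What Z \<inter> generate (BG Z) {g} = {\<one>\<^bsub>BG Z\<^esub>} \<and> What Z <#>\<^bsub>BG Z\<^esub> generate (BG Z) {g} = Ocar Z"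
    by blast
next
  assume "Z = BlP2 1"
  then show "What Z = {\<one>\<^bsub>BG Z\<^esub>}" "OGrp Z \<cong> integer_group"
    using What_Bl1 OGrp_Bl1_iso_integer_group by simp_all
qed

end
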